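(* Let $a_1,\dots,a_n\in\mathbb{C}$ and suppose $f(z)=\theta(z-a_1)\cdots\theta(z-a_n)$ does not change sign on $\mathbb{R}$ (i.e. $f(x)\ge0$ for all $x\in\mathbb{R}$ or $f(x)\le 0$ for all $x\in\mathbb{R}$). Then there exist $\lambda\in\mathbb{R}\setminus\{0\}$ and $b_1,\dots,b_n\in\mathbb{C}$ with $|\operatorname{Im}b_j|<\operatorname{Im}\tau$ for all $j$, such that the indices $1,\dots,n$ can be partitioned into singletons $\{j\}$ with $b_j\in\mathbb{R}$ and pairs $\{j,k\}$ with $b_j=\overline{b_k}$, and $f(z)=\lambda\,\theta(z-b_1)\cdots\theta(z-b_n)$.
   Context: Let $0<q<1$ and $\tau\in i\mathbb{R}_{>0}$ with $q=e^{\pi i\tau}$. The Jacobi theta function is $\theta(x)=\sum_{m\in\mathbb{Z}}q^{m^2}e^{2\pi i m x}$. *)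

theory Defs
  imports "HOL-Analysis.Analysis" "HOL-Library.Disjoint_Sets"
begin

definition nome :: "complex \<Rightarrow> complex" where
  "nome tau = exp (of_real pi * \<i> * tau)"

definition jtheta :: "complex \<Rightarrow> complex \<Rightarrow> complex" where
  "jtheta tau x = (\<Sum>\<^sub>\<infinity>m::int. nome tau ^ nat (m^2) * exp (2 * of_real pi * \<i> * of_int m * x))"

end

theory Submission
  imports Defs "HOL-Complex_Analysis.Complex_Analysis"
begin

text \<open>
  By the argument principle on a period rectangle, the zeros of \<open>\<theta>\<close> are simple and form the coset
  \<open>(1 + \<tau>)/2 + \<Lambda>\<close> of the period lattice \<open>\<Lambda> = \<int> + \<tau>\<int>\<close>; so the order of a zero \<open>w\<close> of
  \<open>f(z) = \<Prod>\<^sub>j \<theta>(z - a\<^sub>j)\<close> counts the \<open>a\<^sub>j\<close> congruent to \<open>w - (1 + \<tau>)/2\<close> modulo \<open>\<Lambda>\<close>.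
  Since \<open>f\<close> is real on \<open>\<real>\<close>, the identity theorem gives \<open>f(z) = \<Prod>\<^sub>j \<theta>(z - cnj a\<^sub>j)\<close>, so
  conjugate cosets carry equally many \<open>a\<^sub>j\<close>; a self-conjugate coset without real points meets the
  line where \<open>z + (1 + \<tau>)/2\<close> is real, and there the order of \<open>f\<close> is even because \<open>f\<close> does not
  change sign. Hence the indices can be paired into conjugate pairs and real singletons, and
  representatives \<open>b\<^sub>j \<equiv> a\<^sub>j\<close> in the strip \<open>|Im z| < Im \<tau>\<close> can be chosen compatibly.
  Quasi-periodicity gives \<open>f(z) = K e\<^sup>c\<^sup>z \<Prod>\<^sub>j \<theta>(z - b\<^sub>j)\<close>, and comparing the factors of both
  products under \<open>z \<mapsto> z + \<tau>\<close> shows \<open>\<Sum>\<^sub>j Im a\<^sub>j = 0 = \<Sum>\<^sub>j Im b\<^sub>j\<close>, which forces \<open>c = 0\<close>;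
  \<open>K\<close> is real because both products are real on \<open>\<real>\<close>.
\<close>

section \<open>The theta series\<close>

definition jtheta_term :: "complex \<Rightarrow> int \<Rightarrow> complex \<Rightarrow> complex" where
  "jtheta_term tau m z = exp (of_int (m^2) * (of_real pi * \<i> * tau) + 2 * of_real pi * \<i> * of_int m * z)"

lemma jtheta_eq_infsum_term: "jtheta tau z = (\<Sum>\<^sub>\<infinity>m. jtheta_term tau m z)"
proof -
  have "nome tau ^ nat (m^2) = exp (of_int (m^2) * (of_real pi * \<i> * tau))" for m :: int
    unfolding nome_def by (metis exp_of_nat_mult of_int_of_nat_eq zero_le_power2 nat_0_le)
  then show ?thesis
    unfolding jtheta_def jtheta_term_def by (simp add: exp_add)
qed

lemma norm_jtheta_term:
  "norm (jtheta_term tau m z) = exp (- pi * Im tau * of_int m ^ 2 - 2 * pi * of_int m * Im z)"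
  by (simp add: jtheta_term_def norm_exp_eq_Re)

lemma summable_exp_neg_quadratic:
  fixes t c :: real
  assumes "t > 0"
  shows "summable (\<lambda>k::nat. exp (- pi * t * of_nat k ^ 2 + c * of_nat k))"
proof -
  obtain N :: nat where N: "(\<bar>c\<bar> + ln 2) / (2 * pi * t) \<le> of_nat N"
    using real_arch_simple by blast
  have "norm (exp (- pi * t * of_nat (Suc k) ^ 2 + c * of_nat (Suc k)))
          \<le> 1/2 * norm (exp (- pi * t * of_nat k ^ 2 + c * of_nat k))" if "k \<ge> N" for k
  proof -
    have "(\<bar>c\<bar> + ln 2) / (2 * pi * t) \<le> of_nat k"
      using N that by (meson of_nat_le_iff order_trans)
    then have "\<bar>c\<bar> + ln 2 \<le> of_nat k * (2 * pi * t)"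
      using assms by (simp add: divide_le_eq)
    moreover have "0 \<le> pi * t" "c \<le> \<bar>c\<bar>"
      using assms by simp_all
    ultimately have "- pi * t * (2 * of_nat k + 1) + c \<le> - ln 2"
      by (simp add: algebra_simps)
    then have "exp (- pi * t * (2 * of_nat k + 1) + c) \<le> exp (- ln 2)"
      by simp
    also have "exp (- ln 2) = (1/2 :: real)"
      by (simp add: exp_minus)
    finally have "exp (- pi * t * (2 * of_nat k + 1) + c) \<le> 1/2" .
    moreover have "exp (- pi * t * of_nat (Suc k) ^ 2 + c * of_nat (Suc k))
        = exp (- pi * t * (2 * of_nat k + 1) + c) * exp (- pi * t * of_nat k ^ 2 + c * of_nat k)"
      by (simp add: exp_add[symmetric] algebra_simps power2_eq_square)
    ultimately show ?thesis by simp
  qed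
  then show ?thesis by (intro summable_ratio_test[of "1/2" N]) auto
qed

lemma summable_on_exp_neg_quadratic:
  fixes t R :: real
  assumes "t > 0"
  shows "(\<lambda>m::int. exp (- pi * t * of_int m ^ 2 + 2 * pi * R * \<bar>of_int m\<bar>)) summable_on UNIV"
    (is "?M summable_on _")
proof -
  have "(?M \<circ> int) summable_on UNIV"
    using summable_exp_neg_quadratic[OF assms, of "2 * pi * R"]
    by (subst summable_on_UNIV_nonneg_real_iff) (auto simp: o_def mult_ac)
  then have nonneg: "?M summable_on range int"
    by (simp add: summable_on_reindex)
  then have nonpos: "?M summable_on uminus ` range int"
    by (subst summable_on_reindex) (auto simp: o_def)
  have "m \<in> range int \<union> uminus ` range int" for m
    by (cases m rule: int_cases2) auto
  then have "UNIV = range int \<union> uminus ` range int"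
    by blast
  then show ?thesis
    using summable_on_union[OF nonneg nonpos] by simp
qed

lemma norm_jtheta_term_le:
  assumes "\<bar>Im z\<bar> \<le> R"
  shows "norm (jtheta_term tau m z) \<le> exp (- pi * Im tau * of_int m ^ 2 + 2 * pi * R * \<bar>of_int m\<bar>)"
proof -
  have "- (of_int m * Im z) \<le> \<bar>of_int m\<bar> * R"
    using assms by (metis abs_ge_minus_self abs_mult abs_ge_zero mult_left_mono order_trans)
  then have "pi * (- (of_int m * Im z)) \<le> pi * (\<bar>of_int m\<bar> * R)"
    by (rule mult_left_mono) simp
  then show ?thesis
    unfolding norm_jtheta_term by (simp add: algebra_simps)
qed

lemma summable_on_jtheta_term:
  assumes "Im tau > 0"
  shows "(\<lambda>m. jtheta_term tau m z) summable_on UNIV"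
  by (rule abs_summable_summable, rule summable_on_comparison_test
      [OF summable_on_exp_neg_quadratic[OF assms, of "\<bar>Im z\<bar>"]])
     (use norm_jtheta_term_le[of z "\<bar>Im z\<bar>"] in auto)

lemma holomorphic_jtheta:
  assumes "Im tau > 0"
  shows "jtheta tau holomorphic_on A"
proof -
  have "jtheta tau holomorphic_on ball z 1" for z
  proof -
    have limit: "uniform_limit (cball z 1) (\<lambda>M w. \<Sum>m\<in>M. jtheta_term tau m w)
        (\<lambda>w. \<Sum>\<^sub>\<infinity>m. jtheta_term tau m w) (finite_subsets_at_top UNIV)"
    proof (rule Weierstrass_m_test_general[OF _ summable_on_exp_neg_quadratic[OF assms, of "\<bar>Im z\<bar> + 1"]])
      fix m w assume "w \<in> cball z 1"
      then have "\<bar>Im w\<bar> \<le> \<bar>Im z\<bar> + 1"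
        using abs_Im_le_cmod[of "w - z"] by (simp add: dist_norm norm_minus_commute)
      then show "norm (jtheta_term tau m w)
          \<le> exp (- pi * Im tau * of_int m ^ 2 + 2 * pi * (\<bar>Im z\<bar> + 1) * \<bar>of_int m\<bar>)"
        by (rule norm_jtheta_term_le)
    qed
    have partial_sums: "\<forall>\<^sub>F M in finite_subsets_at_top UNIV.
        continuous_on (cball z 1) (\<lambda>w. \<Sum>m\<in>M. jtheta_term tau m w) \<and>
        (\<lambda>w. \<Sum>m\<in>M. jtheta_term tau m w) holomorphic_on ball z 1"
      by (intro always_eventually allI conjI)
         (auto simp: jtheta_term_def intro!: continuous_intros holomorphic_intros)
    obtain "(\<lambda>w. \<Sum>\<^sub>\<infinity>m. jtheta_term tau m w) holomorphic_on ball z 1"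
      by (rule holomorphic_uniform_limit[OF partial_sums limit]) (simp add: finite_subsets_at_top_neq_bot)
    then show ?thesis
      by (simp add: jtheta_eq_infsum_term[abs_def])
  qed
  then have "jtheta tau field_differentiable at z" for z
    by (meson centre_in_ball holomorphic_on_imp_differentiable_at open_ball zero_less_one)
  then show ?thesis
    by (simp add: holomorphic_on_def field_differentiable_at_within)
qed

lemma exp_2pi_i_int: "exp (2 * of_real pi * \<i> * of_int m) = 1"
  using exp_2pi_1_int[of m] by (simp add: mult_ac)

definition jtheta_factor :: "complex \<Rightarrow> int \<Rightarrow> complex \<Rightarrow> complex" where
  "jtheta_factor tau n z = exp (- of_real pi * \<i> * tau * of_int n ^ 2 - 2 * of_real pi * \<i> * of_int n * z)"

lemma jtheta_term_lattice_shift: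
  "jtheta_term tau k (z + of_int m + of_int n * tau) = jtheta_factor tau n z * jtheta_term tau (k + n) z"
proof -
  have "of_int (k^2) * (of_real pi * \<i> * tau) + 2 * of_real pi * \<i> * of_int k * (z + of_int m + of_int n * tau)
      = (- of_real pi * \<i> * tau * of_int n ^ 2 - 2 * of_real pi * \<i> * of_int n * z)
        + (of_int ((k + n)^2) * (of_real pi * \<i> * tau) + 2 * of_real pi * \<i> * of_int (k + n) * z)
        + 2 * of_real pi * \<i> * of_int (k * m)"
    by (simp add: algebra_simps power2_eq_square)
  then show ?thesis
    unfolding jtheta_term_def jtheta_factor_def by (simp only: exp_add exp_2pi_i_int mult_1_right)
qed

lemma jtheta_lattice_shift:
  "jtheta tau (z + of_int m + of_int n * tau) = jtheta_factor tau n z * jtheta tau z"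
proof -
  have "jtheta tau (z + of_int m + of_int n * tau) = jtheta_factor tau n z * (\<Sum>\<^sub>\<infinity>k. jtheta_term tau (k + n) z)"
    by (simp add: jtheta_eq_infsum_term jtheta_term_lattice_shift infsum_cmult_right')
  also have "(\<Sum>\<^sub>\<infinity>k. jtheta_term tau (k + n) z) = (\<Sum>\<^sub>\<infinity>k. jtheta_term tau k z)"
    by (rule infsum_reindex_bij_betw[of "\<lambda>k. k + n"])
       (auto simp: bij_betw_def inj_on_def image_iff intro!: exI[of _ "_ - n"])
  finally show ?thesis
    by (simp add: jtheta_eq_infsum_term)
qed

lemma jtheta_plus_1: "jtheta tau (z + 1) = jtheta tau z"
  using jtheta_lattice_shift[of tau z 1 0] by (simp add: jtheta_factor_def)

lemma jtheta_plus_tau: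
  "jtheta tau (z + tau) = exp (- of_real pi * \<i> * tau - 2 * of_real pi * \<i> * z) * jtheta tau z"
  using jtheta_lattice_shift[of tau z 0 1] by (simp add: jtheta_factor_def)

lemma cnj_jtheta:
  assumes "Re tau = 0"
  shows "cnj (jtheta tau z) = jtheta tau (cnj z)"
proof -
  have "cnj tau = - tau"
    using assms by (simp add: complex_eq_iff)
  then have "cnj (jtheta_term tau m z) = jtheta_term tau (- m) (cnj z)" for m
    unfolding jtheta_term_def exp_cnj by (simp add: algebra_simps)
  then have "cnj (jtheta tau z) = (\<Sum>\<^sub>\<infinity>m. jtheta_term tau (- m) (cnj z))"
    by (simp add: jtheta_eq_infsum_term flip: infsum_cnj)
  also have "\<dots> = (\<Sum>\<^sub>\<infinity>m. jtheta_term tau m (cnj z))"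
    by (rule infsum_reindex_bij_betw[of uminus]) (auto simp: bij_betw_def inj_on_def image_iff intro!: exI[of _ "- _"])
  finally show ?thesis
    by (simp add: jtheta_eq_infsum_term)
qed

definition jtheta_root :: "complex \<Rightarrow> complex" where
  "jtheta_root tau = (1 + tau) / 2"

lemma jtheta_root_eq_0: "jtheta tau (jtheta_root tau) = 0"
proof -
  have "of_int ((- 1 - m)^2) * (of_real pi * \<i> * tau) + 2 * of_real pi * \<i> * of_int (- 1 - m) * jtheta_root tau
      = (of_int (m^2) * (of_real pi * \<i> * tau) + 2 * of_real pi * \<i> * of_int m * jtheta_root tau)
        - 2 * of_real pi * \<i> * of_int m - of_real pi * \<i>" for m
    unfolding jtheta_root_def by (simp add: field_simps power2_eq_square)
  then have sym: "jtheta_term tau (- 1 - m) (jtheta_root tau) = - jtheta_term tau m (jtheta_root tau)" for m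
    unfolding jtheta_term_def by (simp add: exp_diff exp_2pi_i_int)
  have "(\<Sum>\<^sub>\<infinity>m. jtheta_term tau m (jtheta_root tau)) = (\<Sum>\<^sub>\<infinity>m. jtheta_term tau (- 1 - m) (jtheta_root tau))"
    by (rule infsum_reindex_bij_betw[of "\<lambda>m. - 1 - m", symmetric])
       (auto simp: bij_betw_def inj_on_def image_iff intro!: exI[of _ "- 1 - _"])
  also have "\<dots> = - (\<Sum>\<^sub>\<infinity>m. jtheta_term tau m (jtheta_root tau))"
    by (simp add: sym infsum_uminus)
  finally show ?thesis
    by (simp add: jtheta_eq_infsum_term)
qed

lemma jtheta_0_neq_0:
  assumes "Re tau = 0" "Im tau > 0"
  shows "jtheta tau 0 \<noteq> 0"
proof -
  have tau: "tau = \<i> * of_real (Im tau)"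
    using assms(1) by (simp add: complex_eq_iff)
  have "jtheta_term tau m 0 = exp (of_real (- pi * Im tau * of_int m ^ 2))" for m
    unfolding jtheta_term_def by (subst tau) (simp add: algebra_simps)
  then have term_0: "jtheta_term tau m 0 = of_real (exp (- pi * Im tau * of_int m ^ 2))" for m
    by (simp only: exp_of_real)
  have summable: "(\<lambda>m. Re (jtheta_term tau m 0)) summable_on UNIV"
    using summable_on_Re[OF summable_on_jtheta_term[OF assms(2)]] by simp
  have "1 = (\<Sum>\<^sub>\<infinity>m\<in>{0}. Re (jtheta_term tau m 0))"
    by (simp add: term_0)
  also have "\<dots> \<le> (\<Sum>\<^sub>\<infinity>m. Re (jtheta_term tau m 0))"
    by (rule infsum_mono_neutral) (use summable in \<open>auto simp: term_0\<close>)
  also have "\<dots> = Re (jtheta tau 0)"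
    by (simp add: jtheta_eq_infsum_term infsum_Re[OF summable_on_jtheta_term[OF assms(2)]])
  finally show ?thesis
    by auto
qed

section \<open>The period lattice\<close>

definition period_lattice :: "complex \<Rightarrow> complex set" where
  "period_lattice tau = {of_int m + of_int n * tau | m n. True}"

lemma period_lattice_iff: "w \<in> period_lattice tau \<longleftrightarrow> (\<exists>m n::int. w = of_int m + of_int n * tau)"
  by (auto simp: period_lattice_def)

lemma zero_in_period_lattice: "0 \<in> period_lattice tau"
  unfolding period_lattice_iff by (rule exI[of _ 0], rule exI[of _ 0]) simp

lemma period_lattice_add:
  assumes "v \<in> period_lattice tau" "w \<in> period_lattice tau"
  shows "v + w \<in> period_lattice tau"
proof -
  obtain m n m' n' :: int where "v = of_int m + of_int n * tau" "w = of_int m' + of_int n' * tau"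
    using assms by (auto simp: period_lattice_iff)
  then have "v + w = of_int (m + m') + of_int (n + n') * tau"
    by (simp add: algebra_simps)
  then show ?thesis
    unfolding period_lattice_iff by blast
qed

lemma period_lattice_uminus:
  assumes "w \<in> period_lattice tau"
  shows "- w \<in> period_lattice tau"
proof -
  obtain m n :: int where "w = of_int m + of_int n * tau"
    using assms by (auto simp: period_lattice_iff)
  then have "- w = of_int (- m) + of_int (- n) * tau"
    by simp
  then show ?thesis
    unfolding period_lattice_iff by blast
qed

lemma period_lattice_diff: "v \<in> period_lattice tau \<Longrightarrow> w \<in> period_lattice tau \<Longrightarrow> v - w \<in> period_lattice tau"
  using period_lattice_add period_lattice_uminus by (metis diff_conv_add_uminus)

lemma period_lattice_diff_commute: "v - w \<in> period_lattice tau \<Longrightarrow> w - v \<in> period_lattice tau"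
  using period_lattice_uminus by fastforce

lemma cnj_in_period_lattice:
  assumes "Re tau = 0" "w \<in> period_lattice tau"
  shows "cnj w \<in> period_lattice tau"
proof -
  obtain m n :: int where "w = of_int m + of_int n * tau"
    using assms(2) by (auto simp: period_lattice_iff)
  moreover have "cnj tau = - tau"
    using assms(1) by (simp add: complex_eq_iff)
  ultimately have "cnj w = of_int m + of_int (- n) * tau"
    by simp
  then show ?thesis
    unfolding period_lattice_iff by blast
qed

lemma cnj_diff_in_period_lattice_iff:
  assumes "Re tau = 0"
  shows "cnj v - cnj w \<in> period_lattice tau \<longleftrightarrow> v - w \<in> period_lattice tau"
  using cnj_in_period_lattice[OF assms, of "v - w"] cnj_in_period_lattice[OF assms, of "cnj v - cnj w"] by auto

lemma Im_in_period_lattice: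
  assumes "Re tau = 0" "w \<in> period_lattice tau"
  obtains n :: int where "Im w = of_int n * Im tau"
proof -
  obtain m n :: int where "w = of_int m + of_int n * tau"
    using assms(2) by (auto simp: period_lattice_iff)
  then have "Im w = of_int n * Im tau"
    using assms(1) by simp
  then show ?thesis
    by (rule that)
qed

lemma period_lattice_reduce:
  assumes "Re tau = 0" "Im tau > 0"
  obtains q where "p - q \<in> period_lattice tau" "0 \<le> Re q" "Re q < 1" "c \<le> Im q" "Im q < c + Im tau"
proof
  define m where "m = \<lfloor>Re p\<rfloor>"
  define n where "n = \<lfloor>(Im p - c) / Im tau\<rfloor>"
  define q where "q = p - of_int m - of_int n * tau"
  show "p - q \<in> period_lattice tau"
    by (auto simp: q_def period_lattice_iff)
  show "0 \<le> Re q" "Re q < 1"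
    using assms by (simp_all add: q_def m_def) linarith+
  have "of_int n \<le> (Im p - c) / Im tau" "(Im p - c) / Im tau < of_int n + 1"
    unfolding n_def by linarith+
  then have "of_int n * Im tau \<le> Im p - c" "Im p - c < (of_int n + 1) * Im tau"
    using assms by (simp_all add: field_simps)
  then show "c \<le> Im q" "Im q < c + Im tau"
    by (simp_all add: q_def algebra_simps)
qed

lemma period_lattice_representative:
  assumes "Re tau = 0" "Im tau > 0"
  shows "\<exists>r. \<forall>z. z - r z \<in> period_lattice tau \<and> - Im tau / 2 \<le> Im (r z) \<and> Im (r z) < Im tau / 2"
proof -
  have "\<forall>z. \<exists>q. z - q \<in> period_lattice tau \<and> - Im tau / 2 \<le> Im q \<and> Im q < Im tau / 2"
  proof
    fix z
    obtain q where "z - q \<in> period_lattice tau" "- Im tau / 2 \<le> Im q" "Im q < - Im tau / 2 + Im tau"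
      using period_lattice_reduce[OF assms, of z "- Im tau / 2"] by blast
    then show "\<exists>q. z - q \<in> period_lattice tau \<and> - Im tau / 2 \<le> Im q \<and> Im q < Im tau / 2"
      by (intro exI[of _ q]) simp
  qed
  then show ?thesis
    by (rule choice)
qed

lemma in_Reals_if_period_congruent_real:
  assumes "Re tau = 0" "Im tau > 0" "z - of_real x \<in> period_lattice tau"
    and "- Im tau / 2 \<le> Im z" "Im z < Im tau / 2"
  shows "z \<in> \<real>"
proof -
  obtain n :: int where "Im (z - of_real x) = of_int n * Im tau"
    by (rule Im_in_period_lattice[OF assms(1,3)])
  then have n: "Im z = of_int n * Im tau"
    by simp
  then have "Im tau * (- 1) \<le> Im tau * (2 * of_int n)" "Im tau * (2 * of_int n) < Im tau * 1"
    using assms(4,5) by (simp_all add: algebra_simps)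
  then have "- 1 \<le> 2 * (of_int n :: real)" "2 * (of_int n :: real) < 1"
    using assms(2) by (simp_all only: mult_le_cancel_left_pos mult_less_cancel_left_pos)
  then have "n = 0"
    by linarith
  then show ?thesis
    using n by (simp add: complex_is_Real_iff)
qed

lemma period_lattice_decomposition_balanced:
  assumes "Re tau = 0" "Im tau > 0" "finite J"
    and periods: "\<And>j. j \<in> J \<Longrightarrow> a j - b j \<in> period_lattice tau"
    and Im_sums: "(\<Sum>j\<in>J. Im (a j)) = (\<Sum>j\<in>J. Im (b j))"
  shows "\<exists>m n. (\<forall>j\<in>J. a j - b j = of_int (m j) + of_int (n j) * tau) \<and> (\<Sum>j\<in>J. n j) = 0"
proof -
  have "\<forall>j\<in>J. \<exists>p :: int \<times> int. a j - b j = of_int (fst p) + of_int (snd p) * tau"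
    using periods by (auto simp: period_lattice_iff)
  then obtain p where p: "\<forall>j\<in>J. a j - b j = of_int (fst (p j)) + of_int (snd (p j)) * tau"
    by (elim bchoice[THEN exE])
  have "Im (a j) - Im (b j) = of_int (snd (p j)) * Im tau" if "j \<in> J" for j
    using arg_cong[OF bspec[OF p that], of Im] assms(1) by simp
  then have "(\<Sum>j\<in>J. of_int (snd (p j)) * Im tau) = (\<Sum>j\<in>J. Im (a j) - Im (b j))"
    by (simp cong: sum.cong)
  also have "\<dots> = 0"
    using Im_sums by (simp add: sum_subtractf)
  finally have "(\<Sum>j\<in>J. real_of_int (snd (p j))) * Im tau = 0"
    by (simp add: sum_distrib_right)
  then have "real_of_int (\<Sum>j\<in>J. snd (p j)) = 0"
    using assms(2) by simp
  then have "(\<Sum>j\<in>J. snd (p j)) = 0"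
    by (simp only: of_int_eq_0_iff)
  then show ?thesis
    using p by (intro exI[of _ "\<lambda>j. fst (p j)"] exI[of _ "\<lambda>j. snd (p j)"]) simp
qed

definition period_coset :: "complex \<Rightarrow> complex \<Rightarrow> complex set" where
  "period_coset tau z = {w. w - z \<in> period_lattice tau}"

lemma period_coset_eq_iff:
  "period_coset tau v = period_coset tau w \<longleftrightarrow> v - w \<in> period_lattice tau"
proof
  assume "period_coset tau v = period_coset tau w"
  moreover have "v \<in> period_coset tau v"
    by (simp add: period_coset_def zero_in_period_lattice)
  ultimately show "v - w \<in> period_lattice tau"
    by (simp add: period_coset_def)
next
  assume vw: "v - w \<in> period_lattice tau"
  have "u - v \<in> period_lattice tau \<longleftrightarrow> u - w \<in> period_lattice tau" for u
    using period_lattice_add[OF _ vw, of "u - v"] period_lattice_diff[OF _ vw, of "u - w"] by auto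
  then show "period_coset tau v = period_coset tau w"
    by (simp add: period_coset_def)
qed

lemma cnj_period_coset:
  assumes "Re tau = 0"
  shows "cnj ` period_coset tau z = period_coset tau (cnj z)"
proof -
  have "w \<in> cnj ` period_coset tau z \<longleftrightarrow> cnj w - z \<in> period_lattice tau" for w
    by (metis (no_types, lifting) complex_cnj_cnj image_iff mem_Collect_eq period_coset_def)
  also have "cnj w - z \<in> period_lattice tau \<longleftrightarrow> w - cnj z \<in> period_lattice tau" for w
    using cnj_in_period_lattice[OF assms, of "cnj w - z"] cnj_in_period_lattice[OF assms, of "w - cnj z"] by auto
  finally show ?thesis
    by (auto simp: period_coset_def)
qed

section \<open>Entire functions\<close>

lemma exists_between_notin_finite:
  fixes a b :: real
  assumes "a < b" "finite B"
  obtains x where "a < x" "x < b" "x \<notin> B"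
proof -
  have "infinite ({a<..<b} - B)"
    using assms by (simp add: Diff_infinite_finite)
  then obtain x where "x \<in> {a<..<b} - B"
    by (metis ex_in_conv finite.emptyI)
  then show ?thesis
    using that by auto
qed

lemma finite_zeros_in_compact:
  fixes f :: "complex \<Rightarrow> complex"
  assumes "f holomorphic_on UNIV" "f w \<noteq> 0" "compact K"
  shows "finite {z\<in>K. f z = 0}"
proof (cases "f constant_on UNIV")
  case True
  then have "f z \<noteq> 0" for z
    using assms(2) unfolding constant_on_def by (metis UNIV_I)
  then show ?thesis
    by simp
next
  case False
  then show ?thesis
    by (rule holomorphic_compact_finite_zeros[OF assms(1) open_UNIV connected_UNIV assms(3) subset_UNIV])
qed

lemma exists_real_prod_neq_0:
  fixes f :: "'j \<Rightarrow> complex \<Rightarrow> complex"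
  assumes "finite J" and holo: "\<And>j. j \<in> J \<Longrightarrow> f j holomorphic_on UNIV"
    and nonzero: "\<And>j. j \<in> J \<Longrightarrow> f j (w j) \<noteq> 0"
  obtains x :: real where "(\<Prod>j\<in>J. f j (of_real x)) \<noteq> 0"
proof -
  define Z where "Z = (\<Union>j\<in>J. {z\<in>closed_segment 0 1. f j z = 0})"
  have "finite Z"
    unfolding Z_def using assms(1) finite_zeros_in_compact[OF holo nonzero compact_segment] by blast
  then obtain x where x: "0 < x" "x < 1" "x \<notin> Re ` Z"
    using exists_between_notin_finite[of 0 1 "Re ` Z"] by auto
  have "of_real x \<in> closed_segment (0::complex) 1"
    using x(1,2) by (auto simp: closed_segment_def scaleR_conv_of_real intro!: exI[of _ x])
  then have "f j (of_real x) \<noteq> 0" if "j \<in> J" for j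
    using x(3) that by (force simp: Z_def image_iff)
  then show ?thesis
    using that assms(1) by auto
qed

lemma zero_islimpt_range_of_real: "(0::complex) islimpt range complex_of_real"
  unfolding islimpt_approachable
proof (intro allI impI)
  fix e :: real assume "e > 0"
  then show "\<exists>x\<in>range complex_of_real. x \<noteq> 0 \<and> dist x 0 < e"
    by (intro bexI[OF _ rangeI[of complex_of_real "e / 2"]]) auto
qed

lemma entire_eq_if_eq_on_reals:
  assumes "f holomorphic_on UNIV" "g holomorphic_on UNIV" "\<And>x::real. f (of_real x) = g (of_real x)"
  shows "f z = g z"
proof -
  have "(\<lambda>z. f z - g z) holomorphic_on UNIV"
    using assms(1,2) by (rule holomorphic_on_diff)
  then have "f z - g z = 0"
    by (rule analytic_continuation[OF _ open_UNIV connected_UNIV subset_UNIV UNIV_I zero_islimpt_range_of_real])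
       (use assms(3) in auto)
  then show ?thesis
    by simp
qed

lemma argument_principle_rectpath:
  fixes f :: "complex \<Rightarrow> complex"
  assumes holo: "f holomorphic_on UNIV" and nonzero: "f w \<noteq> 0"
    and le: "Re a \<le> Re b" "Im a \<le> Im b"
    and boundary: "\<forall>z\<in>path_image (rectpath a b). f z \<noteq> 0"
  shows "finite {z\<in>box a b. f z = 0}"
    and "contour_integral (rectpath a b) (\<lambda>z. deriv f z / f z)
           = 2 * of_real pi * \<i> * (\<Sum>z\<in>{z\<in>box a b. f z = 0}. of_int (zorder f z))"
proof -
  obtain R where R: "cbox a b \<subseteq> ball 0 R"
    using bounded_subset_ballD[OF bounded_cbox] by blast
  define Z where "Z = {z\<in>ball 0 R. f z = 0 \<or> z \<in> {}}"
    \<comment> \<open>zeros and (no) poles, in the form used by \<open>argument_principle\<close>\<close>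
  have "finite {z\<in>cball 0 R. f z = 0}"
    by (rule finite_zeros_in_compact[OF holo nonzero compact_cball])
  then have fin: "finite Z"
    by (rule rev_finite_subset) (auto simp: Z_def)
  have path: "path_image (rectpath a b) \<subseteq> cbox a b"
    by (rule path_image_rectpath_subset_cbox[OF le])
  have "contour_integral (rectpath a b) (\<lambda>z. deriv f z * (\<lambda>_. 1) z / f z)
      = 2 * pi * \<i> * (\<Sum>z\<in>Z. winding_number (rectpath a b) z * (\<lambda>_. 1) z * zorder f z)"
    unfolding Z_def
  proof (rule argument_principle)
    show "path_image (rectpath a b) \<subseteq> ball 0 R - {z\<in>ball 0 R. f z = 0 \<or> z \<in> {}}"
      using path R boundary by auto
    show "\<forall>z. z \<notin> ball 0 R \<longrightarrow> winding_number (rectpath a b) z = 0"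
      using path R by (auto intro!: winding_number_zero_outside[of _ "ball 0 R"])
  qed (use fin holomorphic_on_subset[OF holo] in \<open>auto simp: Z_def\<close>)
  moreover have "winding_number (rectpath a b) z = (if z \<in> box a b then 1 else 0)" if "z \<in> Z" for z
  proof -
    have "z \<notin> cbox a b - box a b"
      using that boundary path_image_rectpath_cbox_minus_box[OF le] by (auto simp: Z_def)
    then show ?thesis
      using winding_number_rectpath[of z a b] winding_number_rectpath_outside[OF le, of z] by auto
  qed
  ultimately have "contour_integral (rectpath a b) (\<lambda>z. deriv f z / f z)
      = 2 * pi * \<i> * (\<Sum>z\<in>Z. if z \<in> box a b then of_int (zorder f z) else 0)"
    by (simp cong: sum.cong) (auto intro: sum.cong)
  also have "(\<Sum>z\<in>Z. if z \<in> box a b then of_int (zorder f z) else 0) = (\<Sum>z\<in>{z\<in>Z. z \<in> box a b}. of_int (zorder f z))"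
    by (simp add: sum.inter_filter[OF fin])
  also have "{z\<in>Z. z \<in> box a b} = {z\<in>box a b. f z = 0}"
    using R box_subset_cbox[of a b] by (auto simp: Z_def)
  finally show "contour_integral (rectpath a b) (\<lambda>z. deriv f z / f z)
           = 2 * of_real pi * \<i> * (\<Sum>z\<in>{z\<in>box a b. f z = 0}. of_int (zorder f z))"
    by simp
  show "finite {z\<in>box a b. f z = 0}"
    using fin R box_subset_cbox[of a b] by (auto simp: Z_def elim!: rev_finite_subset)
qed

lemma has_contour_integral_linepath_translate:
  assumes "(f has_contour_integral I) (linepath a b)"
    and "\<And>z. z \<in> closed_segment a b \<Longrightarrow> g (z + c) = f z + k"
  shows "(g has_contour_integral (I + k * (b - a))) (linepath (a + c) (b + c))"
proof -
  have "((\<lambda>x. f (linepath a b x) * (b - a) + k * (b - a)) has_integral (I + k * (b - a))) {0..1}"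
    using assms(1) has_integral_const_real[of "k * (b - a)" 0 1]
    by (intro has_integral_add) (simp_all add: has_contour_integral_linepath)
  then have "((\<lambda>x. g (linepath (a + c) (b + c) x) * ((b + c) - (a + c))) has_integral (I + k * (b - a))) {0..1}"
  proof (rule has_integral_eq[rotated])
    fix x :: real assume "x \<in> {0..1}"
    moreover have "linepath (a + c) (b + c) x = linepath a b x + c"
      by (simp add: linepath_def algebra_simps scaleR_conv_of_real)
    ultimately show "f (linepath a b x) * (b - a) + k * (b - a) = g (linepath (a + c) (b + c) x) * ((b + c) - (a + c))"
      using assms(2)[OF linepath_in_path] by (simp add: algebra_simps)
  qed
  then show ?thesis
    by (simp add: has_contour_integral_linepath)
qed

lemma zorder_local_factorization:
  fixes f :: "complex \<Rightarrow> complex"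
  assumes "f holomorphic_on UNIV" "f w \<noteq> 0"
  shows "\<exists>g r. r > 0 \<and> isCont g z \<and> g z \<noteq> 0 \<and>
           (\<forall>u. dist z u \<le> r \<longrightarrow> f u = g u * (u - z) ^ nat (zorder f z))"
proof -
  obtain r where r: "r > 0" "zor_poly f z holomorphic_on cball z r"
    and factor: "\<forall>u\<in>cball z r. f u = zor_poly f z u * (u - z) ^ nat (zorder f z) \<and> zor_poly f z u \<noteq> 0"
    using zorder_exist_zero[where z = z, OF assms(1) open_UNIV connected_UNIV UNIV_I] assms(2) by blast
  have "isCont (zor_poly f z) z"
    using continuous_on_interior[OF holomorphic_on_imp_continuous_on[OF r(2)]] r(1)
    by (simp add: interior_cball)
  then show ?thesis
    using factor r(1) by (intro exI[of _ "zor_poly f z"] exI[of _ r]) auto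
qed

lemma real_factor_on_reals:
  fixes f g :: "complex \<Rightarrow> complex"
  assumes factor: "\<And>u. dist (of_real x0) u \<le> r \<Longrightarrow> f u = g u * (u - of_real x0) ^ k"
    and real: "\<And>x::real. f (of_real x) \<in> \<real>"
    and "t \<noteq> 0" "\<bar>t\<bar> \<le> r"
  shows "g (of_real (x0 + t)) = of_real (Re (f (of_real (x0 + t))) / t ^ k)"
proof -
  have "dist (of_real x0) (of_real (x0 + t) :: complex) \<le> r"
    unfolding dist_of_real using assms(4) by (simp add: dist_real_def)
  then have "f (of_real (x0 + t)) = g (of_real (x0 + t)) * of_real (t ^ k)"
    using factor by simp
  moreover have "f (of_real (x0 + t)) = of_real (Re (f (of_real (x0 + t))))"
    using real[of "x0 + t"] by (simp only: complex_is_Real_iff complex_eq_iff) simp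
  ultimately show ?thesis
    using assms(3) by (simp add: field_simps)
qed

lemma even_zorder_of_real:
  fixes f :: "complex \<Rightarrow> complex" and x0 :: real
  assumes holo: "f holomorphic_on UNIV" and nonzero: "f w \<noteq> 0"
    and real: "\<And>x::real. f (of_real x) \<in> \<real>"
    and sign: "(\<forall>x::real. Re (f (of_real x)) \<ge> 0) \<or> (\<forall>x::real. Re (f (of_real x)) \<le> 0)"
  shows "even (nat (zorder f (of_real x0)))"
proof (rule ccontr)
  define k where "k = nat (zorder f (of_real x0))"
  assume "odd (nat (zorder f (of_real x0)))"
  then have odd: "odd k"
    by (simp add: k_def)
  obtain r g where r: "r > 0" and g: "isCont g (of_real x0)" "g (of_real x0) \<noteq> 0"
    and fg: "\<And>u. dist (of_real x0) u \<le> r \<Longrightarrow> f u = g u * (u - of_real x0) ^ k"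
    using zorder_local_factorization[OF holo nonzero, where z = "of_real x0"] unfolding k_def by blast
  define u where "u = (\<lambda>t. Re (g (of_real (x0 + t))))"
  have g_real: "g (of_real (x0 + t)) = of_real (u t)" and u: "u t = Re (f (of_real (x0 + t))) / t ^ k"
    if "t \<noteq> 0" "\<bar>t\<bar> < r" for t
    using real_factor_on_reals[OF fg real that(1) less_imp_le[OF that(2)]] by (simp_all add: u_def)
  have near: "\<forall>\<^sub>F t in at (0::real). t \<noteq> 0 \<and> \<bar>t\<bar> < r"
    using r(1) by (auto simp: eventually_at dist_norm)
  have lim: "((\<lambda>t. g (of_real (x0 + s * t))) \<longlongrightarrow> g (of_real x0)) (at 0)" for s
    by (rule isCont_tendsto_compose[OF g(1)]) (auto intro!: tendsto_eq_intros)
  have "((\<lambda>t. Im (g (of_real (x0 + 1 * t)))) \<longlongrightarrow> 0) (at 0)"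
    by (rule tendsto_eventually) (use near g_real in \<open>auto elim!: eventually_mono\<close>)
  then have "Im (g (of_real x0)) = 0"
    using tendsto_unique[OF at_neq_bot tendsto_Im[OF lim[of 1]]] by simp
  moreover have "((\<lambda>t. u t * u (- t)) \<longlongrightarrow> Re (g (of_real x0)) * Re (g (of_real x0))) (at 0)"
    unfolding u_def using lim[of 1] lim[of "- 1"] by (auto intro!: tendsto_intros)
  \<comment> \<open>as \<open>k\<close> is odd, \<open>(- t) ^ k = - t ^ k\<close> turns the sign condition into \<open>u t * u (- t) \<le> 0\<close>\<close>
  then have "Re (g (of_real x0)) * Re (g (of_real x0)) \<le> 0"
  proof (rule tendsto_upperbound)
    have "u t * u (- t) \<le> 0" if "t \<noteq> 0" "\<bar>t\<bar> < r" for t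
    proof -
      have "u t * u (- t) = - (Re (f (of_real (x0 + t))) * Re (f (of_real (x0 - t)))) / (t ^ k) ^ 2"
        using that odd by (simp add: u power2_eq_square power_minus_odd)
      moreover have "Re (f (of_real (x0 + t))) * Re (f (of_real (x0 - t))) \<ge> 0"
        using sign by (metis mult_nonneg_nonneg mult_nonpos_nonpos)
      ultimately show ?thesis
        by (simp add: divide_nonpos_pos)
    qed
    then show "\<forall>\<^sub>F t in at 0. u t * u (- t) \<le> 0"
      using near by (auto elim!: eventually_mono)
  qed simp
  ultimately have "g (of_real x0) = 0"
    by (simp add: complex_eq_iff mult_le_0_iff) linarith
  then show False
    using g(2) by simp
qed

section \<open>Zeros of the theta function\<close>

lemma jtheta_add_period_eq_0_iff:
  assumes "w \<in> period_lattice tau"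
  shows "jtheta tau (z + w) = 0 \<longleftrightarrow> jtheta tau z = 0"
proof -
  obtain m n :: int where "w = of_int m + of_int n * tau"
    using assms by (auto simp: period_lattice_iff)
  then show ?thesis
    using jtheta_lattice_shift[of tau z m n] by (simp add: add.assoc jtheta_factor_def)
qed

lemma has_field_derivative_jtheta:
  assumes "Im tau > 0"
  shows "(jtheta tau has_field_derivative deriv (jtheta tau) z) (at z)"
  using holomorphic_derivI[OF holomorphic_jtheta[OF assms]] by blast

lemma deriv_jtheta_plus_1:
  assumes "Im tau > 0"
  shows "deriv (jtheta tau) (z + 1) = deriv (jtheta tau) z"
proof -
  have "((\<lambda>x. jtheta tau (x + 1)) has_field_derivative deriv (jtheta tau) (z + 1)) (at z)"
    using has_field_derivative_jtheta[OF assms, of "z + 1"] by (simp add: DERIV_shift)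
  then show ?thesis
    by (simp add: jtheta_plus_1 DERIV_imp_deriv)
qed

lemma logderiv_jtheta_plus_tau:
  assumes "Im tau > 0" "jtheta tau z \<noteq> 0"
  shows "deriv (jtheta tau) (z + tau) / jtheta tau (z + tau)
           = deriv (jtheta tau) z / jtheta tau z - 2 * of_real pi * \<i>"
proof -
  define E where "E = (\<lambda>x. exp (- of_real pi * \<i> * tau - 2 * of_real pi * \<i> * x))"
  have "((\<lambda>x. jtheta tau (x + tau)) has_field_derivative deriv (jtheta tau) (z + tau)) (at z)"
    using has_field_derivative_jtheta[OF assms(1), of "z + tau"] by (simp add: DERIV_shift)
  then have "((\<lambda>x. E x * jtheta tau x) has_field_derivative deriv (jtheta tau) (z + tau)) (at z)"
    by (simp add: E_def jtheta_plus_tau)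
  moreover have "((\<lambda>x. E x * jtheta tau x) has_field_derivative
      E z * (- 2 * of_real pi * \<i>) * jtheta tau z + E z * deriv (jtheta tau) z) (at z)"
    unfolding E_def by (rule derivative_eq_intros has_field_derivative_jtheta[OF assms(1)] refl | simp)+
  ultimately have "deriv (jtheta tau) (z + tau)
      = E z * (- 2 * of_real pi * \<i>) * jtheta tau z + E z * deriv (jtheta tau) z"
    by (rule DERIV_unique)
  moreover have "jtheta tau (z + tau) = E z * jtheta tau z" "E z \<noteq> 0"
    by (simp_all add: E_def jtheta_plus_tau)
  ultimately show ?thesis
    using assms(2) by (simp add: divide_simps) (simp add: algebra_simps)
qed

text \<open>The vertical sides cancel by \<open>1\<close>-periodicity; the horizontal sides differ by \<open>2 \<pi> \<i>\<close>
  because the logarithmic derivative drops by \<open>2 \<pi> \<i>\<close> under \<open>z \<mapsto> z + tau\<close>.\<close>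

lemma has_contour_integral_logderiv_jtheta_rectpath:
  assumes "Re tau = 0" "Im tau > 0"
    and boundary: "\<forall>w\<in>path_image (rectpath s (s + 1 + tau)). jtheta tau w \<noteq> 0"
  shows "((\<lambda>z. deriv (jtheta tau) z / jtheta tau z) has_contour_integral (2 * of_real pi * \<i>))
           (rectpath s (s + 1 + tau))"
proof -
  define L where "L = (\<lambda>z. deriv (jtheta tau) z / jtheta tau z)"
  have "Complex (Re (s + 1 + tau)) (Im s) = s + 1" "Complex (Re s) (Im (s + 1 + tau)) = s + tau"
    using assms(1) by (simp_all add: complex_eq_iff)
  then have rect: "rectpath s (s + 1 + tau) = linepath s (s + 1) +++ linepath (s + 1) (s + 1 + tau)
      +++ linepath (s + 1 + tau) (s + tau) +++ linepath (s + tau) s"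
    unfolding rectpath_def Let_def by simp
  then have "path_image (rectpath s (s + 1 + tau)) = closed_segment s (s + 1) \<union> closed_segment (s + 1) (s + 1 + tau)
      \<union> closed_segment (s + 1 + tau) (s + tau) \<union> closed_segment (s + tau) s"
    by (simp add: path_image_join Un_assoc)
  then have path_image: "path_image (rectpath s (s + 1 + tau)) \<supseteq> closed_segment s (s + 1) \<union> closed_segment s (s + tau)"
    by (auto simp: closed_segment_commute)
  have bottom: "jtheta tau w \<noteq> 0" if "w \<in> closed_segment s (s + 1)" for w
    using boundary that path_image by blast
  have left: "jtheta tau w \<noteq> 0" if "w \<in> closed_segment s (s + tau)" for w
    using boundary that path_image by blast
  have "continuous_on A L" if "\<And>w. w \<in> A \<Longrightarrow> jtheta tau w \<noteq> 0" for A
    unfolding L_def using that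
    by (intro continuous_on_divide holomorphic_on_imp_continuous_on holomorphic_jtheta[OF assms(2)]
        holomorphic_on_subset[OF holomorphic_deriv[OF holomorphic_jtheta[OF assms(2)] open_UNIV]]) auto
  then obtain I1 I2 where I1: "(L has_contour_integral I1) (linepath s (s + 1))"
    and I2: "(L has_contour_integral I2) (linepath s (s + tau))"
    using contour_integrable_continuous_linepath bottom left by (metis contour_integrable_on_def)
  have "(L has_contour_integral I2) (linepath (s + 1) (s + 1 + tau))"
    using has_contour_integral_linepath_translate[OF I2, of L 1 0]
    by (simp add: L_def add_ac deriv_jtheta_plus_1[OF assms(2)] jtheta_plus_1)
  moreover have "(L has_contour_integral (I1 - 2 * of_real pi * \<i>)) (linepath (s + tau) (s + 1 + tau))"
    using has_contour_integral_linepath_translate[OF I1, of L tau "- 2 * of_real pi * \<i>"]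
    by (simp add: L_def add_ac logderiv_jtheta_plus_tau[OF assms(2) bottom])
  then have "(L has_contour_integral (2 * of_real pi * \<i> - I1)) (linepath (s + 1 + tau) (s + tau))"
    using has_contour_integral_reversepath[of "linepath (s + tau) (s + 1 + tau)"] by fastforce
  moreover have "(L has_contour_integral (- I2)) (linepath (s + tau) s)"
    using has_contour_integral_reversepath[OF _ I2] by simp
  ultimately have "(L has_contour_integral (I1 + (I2 + ((2 * of_real pi * \<i> - I1) + - I2))))
      (rectpath s (s + 1 + tau))"
    unfolding rect by (intro has_contour_integral_join I1 valid_path_join) auto
  then show ?thesis
    by (simp add: L_def)
qed

lemma zorder_jtheta_pos:
  assumes "Re tau = 0" "Im tau > 0" "jtheta tau p = 0"
  shows "zorder (jtheta tau) p > 0"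
proof -
  have "\<forall>\<^sub>F w in at p. jtheta tau w \<noteq> 0 \<and> w \<in> UNIV"
    by (rule non_zero_neighbour_alt[OF holomorphic_jtheta[OF assms(2)] _ _ _ _ jtheta_0_neq_0[OF assms(1,2)]]) auto
  then have "frequently (\<lambda>w. jtheta tau w \<noteq> 0) (at p)"
    by (intro eventually_frequently) (auto elim: eventually_mono)
  then show ?thesis
    using zorder_pos_iff[OF holomorphic_jtheta[OF assms(2)]] assms(3) by auto
qed

lemma jtheta_unique_zero_in_period_rect:
  assumes "Re tau = 0" "Im tau > 0"
    and boundary: "\<forall>w\<in>path_image (rectpath s (s + 1 + tau)). jtheta tau w \<noteq> 0"
    and p: "p \<in> box s (s + 1 + tau)" "jtheta tau p = 0"
  shows "zorder (jtheta tau) p = 1"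
    and "\<And>q. q \<in> box s (s + 1 + tau) \<Longrightarrow> jtheta tau q = 0 \<Longrightarrow> q = p"
proof -
  define Z where "Z = {z\<in>box s (s + 1 + tau). jtheta tau z = 0}"
  have le: "Re s \<le> Re (s + 1 + tau)" "Im s \<le> Im (s + 1 + tau)"
    using assms(1,2) by simp_all
  note principle = argument_principle_rectpath[OF holomorphic_jtheta[OF assms(2)]
      jtheta_0_neq_0[OF assms(1,2)] le boundary]
  have fin: "finite Z"
    using principle(1) by (simp add: Z_def)
  have "2 * of_real pi * \<i> * of_int (\<Sum>z\<in>Z. zorder (jtheta tau) z) = 2 * of_real pi * \<i>"
    using principle(2) contour_integral_unique[OF has_contour_integral_logderiv_jtheta_rectpath[OF assms(1,2) boundary]]
    by (simp add: Z_def)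
  then have sum: "(\<Sum>z\<in>Z. zorder (jtheta tau) z) = 1"
    by (metis of_int_eq_1_iff mult_cancel_left1 mult_eq_0_iff pi_neq_zero of_real_eq_0_iff
        complex_i_not_zero zero_neq_numeral)
  have pos: "zorder (jtheta tau) z > 0" if "z \<in> Z" for z
    using zorder_jtheta_pos[OF assms(1,2)] that by (simp add: Z_def)
  have "p \<in> Z"
    using p by (simp add: Z_def)
  then have split: "zorder (jtheta tau) p + (\<Sum>z\<in>Z - {p}. zorder (jtheta tau) z) = 1"
    using sum by (simp add: sum.remove[OF fin])
  moreover have rest: "(\<Sum>z\<in>Z - {p}. zorder (jtheta tau) z) \<ge> 0"
    using pos by (intro sum_nonneg) (simp add: less_imp_le)
  ultimately show "zorder (jtheta tau) p = 1"
    using pos[OF \<open>p \<in> Z\<close>] by linarith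
  show "q = p" if "q \<in> box s (s + 1 + tau)" "jtheta tau q = 0" for q
  proof (rule ccontr)
    assume "q \<noteq> p"
    then have "q \<in> Z - {p}"
      using that by (simp add: Z_def)
    then have "zorder (jtheta tau) q \<le> (\<Sum>z\<in>Z - {p}. zorder (jtheta tau) z)"
      using pos fin by (intro member_le_sum) (auto intro: less_imp_le)
    moreover have "zorder (jtheta tau) p > 0" "zorder (jtheta tau) q > 0"
      using pos \<open>p \<in> Z\<close> \<open>q \<in> Z - {p}\<close> by auto
    ultimately show False
      using split by linarith
  qed
qed

lemma exists_zero_free_period_rect:
  assumes "Re tau = 0" "Im tau > 0"
    and close: "\<bar>Re p1 - Re p2\<bar> < 1" "\<bar>Im p1 - Im p2\<bar> < Im tau"
  obtains s where "p1 \<in> box s (s + 1 + tau)" "p2 \<in> box s (s + 1 + tau)"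
    "\<forall>w\<in>path_image (rectpath s (s + 1 + tau)). jtheta tau w \<noteq> 0"
proof -
  define t where "t = Im tau"
  define Z where "Z = {z\<in>cball p1 (1 + t). jtheta tau z = 0}"
  have "finite Z"
    unfolding Z_def
    by (rule finite_zeros_in_compact[OF holomorphic_jtheta[OF assms(2)] jtheta_0_neq_0[OF assms(1,2)] compact_cball])
  moreover have "max (Re p1) (Re p2) - 1 < min (Re p1) (Re p2)" "max (Im p1) (Im p2) - t < min (Im p1) (Im p2)"
    using close by (auto simp: t_def)
  \<comment> \<open>place the edges so that they avoid the finitely many zeros near \<open>p1\<close>\<close>
  ultimately obtain x0 y0 where
    x0: "max (Re p1) (Re p2) - 1 < x0" "x0 < min (Re p1) (Re p2)" "x0 \<notin> Re ` Z \<union> (\<lambda>x. x - 1) ` Re ` Z" and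
    y0: "max (Im p1) (Im p2) - t < y0" "y0 < min (Im p1) (Im p2)" "y0 \<notin> Im ` Z \<union> (\<lambda>y. y - t) ` Im ` Z"
    by (metis exists_between_notin_finite finite_Un finite_imageI)
  define s where "s = Complex x0 y0"
  have in_box: "p \<in> box s (s + 1 + tau)" if "p = p1 \<or> p = p2" for p
    using x0(1,2) y0(1,2) that assms(1) by (auto simp: in_box_complex_iff s_def t_def)
  have "jtheta tau w \<noteq> 0" if w: "w \<in> path_image (rectpath s (s + 1 + tau))" for w
  proof
    assume zero: "jtheta tau w = 0"
    have "Re s \<le> Re (s + 1 + tau)" "Im s \<le> Im (s + 1 + tau)"
      using assms(1,2) by (simp_all add: s_def)
    then have "w \<in> cbox s (s + 1 + tau) - box s (s + 1 + tau)"
      using w path_image_rectpath_cbox_minus_box by blast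
    then have r: "x0 \<le> Re w" "Re w \<le> x0 + 1" "y0 \<le> Im w" "Im w \<le> y0 + t"
      and edge: "Re w = x0 \<or> Re w = x0 + 1 \<or> Im w = y0 \<or> Im w = y0 + t"
      using assms(1) by (auto simp: in_box_complex_iff in_cbox_complex_iff s_def t_def)
    have "\<bar>Re (w - p1)\<bar> \<le> 1" "\<bar>Im (w - p1)\<bar> \<le> t"
      using r x0(1,2) y0(1,2) by auto
    then have "norm (w - p1) \<le> 1 + t"
      using cmod_le[of "w - p1"] by linarith
    then have "w \<in> Z"
      using zero by (simp add: Z_def dist_norm norm_minus_commute)
    then show False
      using edge x0(3) y0(3) by (auto simp: image_iff)
  qed
  then show ?thesis
    using that in_box by blast
qed

lemma jtheta_eq_0_iff:
  assumes "Re tau = 0" "Im tau > 0"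
  shows "jtheta tau p = 0 \<longleftrightarrow> p - jtheta_root tau \<in> period_lattice tau"
proof
  assume "p - jtheta_root tau \<in> period_lattice tau"
  then show "jtheta tau p = 0"
    using jtheta_add_period_eq_0_iff[of "p - jtheta_root tau" tau "jtheta_root tau"] jtheta_root_eq_0 by simp
next
  assume zero: "jtheta tau p = 0"
  obtain q where q: "p - q \<in> period_lattice tau" "0 \<le> Re q" "Re q < 1" "0 \<le> Im q" "Im q < Im tau"
    using period_lattice_reduce[OF assms, of p 0] by auto
  have "jtheta tau q = 0"
    using zero jtheta_add_period_eq_0_iff[OF q(1), of q] by simp
  moreover have "Re (jtheta_root tau) = 1/2" "Im (jtheta_root tau) = Im tau / 2"
    using assms(1) by (simp_all add: jtheta_root_def)
  then have "\<bar>Re q - Re (jtheta_root tau)\<bar> < 1" "\<bar>Im q - Im (jtheta_root tau)\<bar> < Im tau"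
    using q by auto
  then obtain s where s: "q \<in> box s (s + 1 + tau)" "jtheta_root tau \<in> box s (s + 1 + tau)"
    "\<forall>w\<in>path_image (rectpath s (s + 1 + tau)). jtheta tau w \<noteq> 0"
    using exists_zero_free_period_rect[OF assms] by blast
  ultimately have "q = jtheta_root tau"
    using jtheta_unique_zero_in_period_rect(2)[OF assms s(3) s(2) jtheta_root_eq_0] s(1) by blast
  then show "p - jtheta_root tau \<in> period_lattice tau"
    using q(1) by simp
qed

lemma zorder_jtheta_eq_1:
  assumes "Re tau = 0" "Im tau > 0" "jtheta tau p = 0"
  shows "zorder (jtheta tau) p = 1"
proof -
  obtain s where "p \<in> box s (s + 1 + tau)" "\<forall>w\<in>path_image (rectpath s (s + 1 + tau)). jtheta tau w \<noteq> 0"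
    using exists_zero_free_period_rect[OF assms(1,2), of p p] assms(2) by auto
  then show ?thesis
    using jtheta_unique_zero_in_period_rect(1)[OF assms(1,2)] assms(3) by blast
qed

section \<open>Products of shifted theta functions\<close>

lemma holomorphic_jtheta_shift:
  assumes "Im tau > 0"
  shows "(\<lambda>z. jtheta tau (z - c)) holomorphic_on A"
  by (rule holomorphic_on_compose_gen[OF _ holomorphic_jtheta[OF assms], unfolded o_def])
     (auto intro: holomorphic_intros)

lemma holomorphic_prod_jtheta:
  assumes "Im tau > 0"
  shows "(\<lambda>z. \<Prod>j\<in>J. jtheta tau (z - a j)) holomorphic_on A"
  by (intro holomorphic_on_prod holomorphic_jtheta_shift[OF assms])

lemma zorder_jtheta_shift:
  assumes "Re tau = 0" "Im tau > 0"
  shows "zorder (\<lambda>z. jtheta tau (z - c)) p = (if jtheta tau (p - c) = 0 then 1 else 0)"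
proof -
  have "zorder (\<lambda>z. jtheta tau (z - c)) p = zorder (\<lambda>u. jtheta tau (u + p - c)) 0"
    by (subst zorder_shift) (simp add: algebra_simps)
  also have "\<dots> = zorder (jtheta tau) (p - c)"
    by (subst zorder_shift[of _ "p - c"]) (simp add: algebra_simps)
  also have "\<dots> = (if jtheta tau (p - c) = 0 then 1 else 0)"
  proof -
    have "jtheta tau analytic_on {p - c}"
      using holomorphic_jtheta[OF assms(2)] analytic_on_holomorphic by blast
    then show ?thesis
      by (simp add: zorder_jtheta_eq_1[OF assms] zorder_eq_0I)
  qed
  finally show ?thesis .
qed

lemma zorder_prod_jtheta:
  assumes "Re tau = 0" "Im tau > 0" "finite J"
  shows "zorder (\<lambda>z. \<Prod>j\<in>J. jtheta tau (z - a j)) p = int (card {j\<in>J. jtheta tau (p - a j) = 0})"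
proof -
  have "\<forall>\<^sub>F z in at p. jtheta tau (z - a j) \<noteq> 0" for j
    using non_zero_neighbour_alt[where \<beta> = "a j", OF holomorphic_jtheta_shift[OF assms(2), where c = "a j"]
        open_UNIV connected_UNIV UNIV_I UNIV_I] jtheta_0_neq_0[OF assms(1,2)]
    by (auto elim: eventually_mono)
  then have "\<forall>\<^sub>F z in at p. \<forall>j\<in>J. jtheta tau (z - a j) \<noteq> 0"
    by (simp add: eventually_ball_finite_distrib[OF assms(3)])
  then have "\<forall>\<^sub>F z in at p. (\<Prod>j\<in>J. jtheta tau (z - a j)) \<noteq> 0"
    by (rule eventually_mono) (simp add: assms(3))
  moreover have "(\<lambda>z. jtheta tau (z - a j)) analytic_on {p}" for j
    using holomorphic_jtheta_shift[OF assms(2)] analytic_on_holomorphic by blast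
  ultimately have "zorder (\<lambda>z. \<Prod>j\<in>J. jtheta tau (z - a j)) p = (\<Sum>j\<in>J. zorder (\<lambda>z. jtheta tau (z - a j)) p)"
    by (intro zorder_prod_analytic)
  also have "\<dots> = int (card {j\<in>J. jtheta tau (p - a j) = 0})"
    using assms(3) by (simp add: zorder_jtheta_shift[OF assms(1,2)] sum.If_cases Int_def conj_commute)
  finally show ?thesis .
qed

lemma zorder_prod_jtheta_coset:
  assumes "Re tau = 0" "Im tau > 0" "finite J"
  shows "zorder (\<lambda>z. \<Prod>j\<in>J. jtheta tau (z - a j)) (w + jtheta_root tau)
           = int (card {j\<in>J. period_coset tau (a j) = period_coset tau w})"
proof -
  have "jtheta tau (w + jtheta_root tau - a j) = 0 \<longleftrightarrow> period_coset tau (a j) = period_coset tau w" for j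
    using period_lattice_diff_commute[of "a j" w tau] period_lattice_diff_commute[of w "a j" tau]
    by (auto simp: jtheta_eq_0_iff[OF assms(1,2)] period_coset_eq_iff)
  then show ?thesis
    by (simp add: zorder_prod_jtheta[OF assms])
qed

lemma exists_real_prod_jtheta_neq_0:
  assumes "Re tau = 0" "Im tau > 0" "finite J"
  obtains x :: real where "(\<Prod>j\<in>J. jtheta tau (of_real x - a j)) \<noteq> 0"
proof (rule exists_real_prod_neq_0[where f = "\<lambda>j z. jtheta tau (z - a j)" and w = a, OF assms(3)])
  show "(\<lambda>z. jtheta tau (z - a j)) holomorphic_on UNIV" for j
    by (rule holomorphic_jtheta_shift[OF assms(2)])
  show "jtheta tau (a j - a j) \<noteq> 0" for j
    using jtheta_0_neq_0[OF assms(1,2)] by simp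
qed (rule that)

lemma prod_jtheta_cnj_eq_if_real:
  assumes "Re tau = 0" "Im tau > 0"
    and real: "\<And>x::real. (\<Prod>j\<in>J. jtheta tau (of_real x - a j)) \<in> \<real>"
  shows "(\<Prod>j\<in>J. jtheta tau (z - a j)) = (\<Prod>j\<in>J. jtheta tau (z - cnj (a j)))"
proof (rule entire_eq_if_eq_on_reals[OF holomorphic_prod_jtheta[OF assms(2)] holomorphic_prod_jtheta[OF assms(2)]])
  fix x :: real
  have "(\<Prod>j\<in>J. jtheta tau (of_real x - a j)) = cnj (\<Prod>j\<in>J. jtheta tau (of_real x - a j))"
    using real[of x] by (simp add: Reals_cnj_iff)
  also have "\<dots> = (\<Prod>j\<in>J. jtheta tau (of_real x - cnj (a j)))"
    by (simp add: cnj_jtheta[OF assms(1)])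
  finally show "(\<Prod>j\<in>J. jtheta tau (of_real x - a j)) = (\<Prod>j\<in>J. jtheta tau (of_real x - cnj (a j)))" .
qed

lemma prod_jtheta_real_if_conj_closed:
  assumes "Re tau = 0"
    and \<sigma>: "\<And>j. j \<in> J \<Longrightarrow> \<sigma> j \<in> J \<and> \<sigma> (\<sigma> j) = j \<and> b (\<sigma> j) = cnj (b j)"
  shows "(\<Prod>j\<in>J. jtheta tau (of_real x - b j)) \<in> \<real>"
proof -
  have "bij_betw \<sigma> J J"
    using \<sigma> by (intro bij_betw_byWitness[where f' = \<sigma>]) auto
  then have "(\<Prod>j\<in>J. jtheta tau (of_real x - b (\<sigma> j))) = (\<Prod>j\<in>J. jtheta tau (of_real x - b j))"
    by (rule prod.reindex_bij_betw)
  moreover have "cnj (\<Prod>j\<in>J. jtheta tau (of_real x - b j)) = (\<Prod>j\<in>J. jtheta tau (of_real x - b (\<sigma> j)))"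
    using \<sigma> by (simp add: cnj_jtheta[OF assms(1)])
  ultimately show ?thesis
    by (simp add: Reals_cnj_iff)
qed

lemma prod_jtheta_plus_tau:
  "(\<Prod>j\<in>J. jtheta tau (z + tau - a j))
     = (\<Prod>j\<in>J. exp (- of_real pi * \<i> * tau - 2 * of_real pi * \<i> * (z - a j))) * (\<Prod>j\<in>J. jtheta tau (z - a j))"
  using jtheta_plus_tau[of tau "z - _"] by (simp add: algebra_simps flip: prod.distrib)

text \<open>Comparing the quasi-periodicity factors of the two sides under \<open>z \<mapsto> z + tau\<close>.\<close>

lemma sum_Im_eq_0_if_prod_jtheta_real:
  assumes "Re tau = 0" "Im tau > 0" "finite J"
    and real: "\<And>x::real. (\<Prod>j\<in>J. jtheta tau (of_real x - a j)) \<in> \<real>"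
  shows "(\<Sum>j\<in>J. Im (a j)) = 0"
proof -
  obtain x where nonzero: "(\<Prod>j\<in>J. jtheta tau (of_real x - a j)) \<noteq> 0"
    using exists_real_prod_jtheta_neq_0[OF assms(1-3)] .
  define E where "E = (\<lambda>c. \<Prod>j\<in>J. exp (- of_real pi * \<i> * tau - 2 * of_real pi * \<i> * (of_real x - c j)))"
  note cnj_eq = prod_jtheta_cnj_eq_if_real[OF assms(1,2) real]
  have "E a * (\<Prod>j\<in>J. jtheta tau (of_real x - a j)) = E (\<lambda>j. cnj (a j)) * (\<Prod>j\<in>J. jtheta tau (of_real x - a j))"
    using cnj_eq[of "of_real x + tau"] cnj_eq[of "of_real x"]
    by (simp add: E_def prod_jtheta_plus_tau)
  then have "E a = E (\<lambda>j. cnj (a j))"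
    using nonzero by simp
  moreover have "E a = exp (of_real (- 4 * pi * (\<Sum>j\<in>J. Im (a j)))) * E (\<lambda>j. cnj (a j))"
  proof -
    have "exp (- of_real pi * \<i> * tau - 2 * of_real pi * \<i> * (of_real x - c))
        = exp (of_real (- 4 * pi * Im c)) * exp (- of_real pi * \<i> * tau - 2 * of_real pi * \<i> * (of_real x - cnj c))"
      (is "_ = ?factor c") for c
    proof -
      have "- of_real pi * \<i> * tau - 2 * of_real pi * \<i> * (of_real x - c)
          = of_real (- 4 * pi * Im c) + (- of_real pi * \<i> * tau - 2 * of_real pi * \<i> * (of_real x - cnj c))"
        by (simp add: complex_eq_iff algebra_simps)
      then show ?thesis
        by (metis exp_add)
    qed
    then have "E a = (\<Prod>j\<in>J. ?factor (a j))"
      unfolding E_def by (rule prod.cong[OF refl])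
    also have "\<dots> = (\<Prod>j\<in>J. exp (of_real (- 4 * pi * Im (a j)))) * E (\<lambda>j. cnj (a j))"
      by (simp add: E_def prod.distrib)
    also have "(\<Prod>j\<in>J. exp (of_real (- 4 * pi * Im (a j)))) = exp (of_real (- 4 * pi * (\<Sum>j\<in>J. Im (a j))))"
      by (simp add: exp_sum[OF assms(3), symmetric] sum_distrib_left)
    finally show ?thesis .
  qed
  moreover have "E (\<lambda>j. cnj (a j)) \<noteq> 0"
    by (simp add: E_def assms(3))
  ultimately have "exp (- 4 * pi * (\<Sum>j\<in>J. Im (a j))) = 1"
    by (metis mult_cancel_right1 exp_of_real of_real_eq_1_iff)
  then show ?thesis
    by simp
qed

lemma prod_jtheta_shift_periods:
  assumes "finite J"
    and periods: "\<And>j. j \<in> J \<Longrightarrow> a j - b j = of_int (m j) + of_int (n j) * tau"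
    and balanced: "(\<Sum>j\<in>J. n j) = 0"
  shows "\<exists>K. K \<noteq> 0 \<and> (\<forall>z. (\<Prod>j\<in>J. jtheta tau (z - a j)) = K * (\<Prod>j\<in>J. jtheta tau (z - b j)))"
proof (intro exI conjI allI)
  define K where "K = exp (\<Sum>j\<in>J. - of_real pi * \<i> * tau * of_int (n j) ^ 2 - 2 * of_real pi * \<i> * of_int (n j) * b j)"
  show "K \<noteq> 0"
    by (simp add: K_def)
  fix z
  have "jtheta tau (z - a j) = jtheta_factor tau (- n j) (z - b j) * jtheta tau (z - b j)" if "j \<in> J" for j
    using jtheta_lattice_shift[of tau "z - b j" "- m j" "- n j"] periods[OF that]
    by (simp add: algebra_simps)
  then have "(\<Prod>j\<in>J. jtheta tau (z - a j))
      = exp (\<Sum>j\<in>J. - of_real pi * \<i> * tau * of_int (n j) ^ 2 + 2 * of_real pi * \<i> * of_int (n j) * (z - b j))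
        * (\<Prod>j\<in>J. jtheta tau (z - b j))"
    by (simp add: prod.distrib jtheta_factor_def exp_sum[OF assms(1)] cong: prod.cong)
  also have "(\<Sum>j\<in>J. - of_real pi * \<i> * tau * of_int (n j) ^ 2 + 2 * of_real pi * \<i> * of_int (n j) * (z - b j))
      = (\<Sum>j\<in>J. - of_real pi * \<i> * tau * of_int (n j) ^ 2 - 2 * of_real pi * \<i> * of_int (n j) * b j)
        + 2 * of_real pi * \<i> * z * of_int (\<Sum>j\<in>J. n j)"
    by (simp add: sum_subtractf sum.distrib sum_distrib_left sum_negf algebra_simps)
  finally show "(\<Prod>j\<in>J. jtheta tau (z - a j)) = K * (\<Prod>j\<in>J. jtheta tau (z - b j))"
    by (simp add: K_def balanced)
qed

section \<open>Pairing indices by an involution\<close>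

lemma card_Collect_remove:
  assumes "finite J" "j \<in> J"
  shows "card {i\<in>J. P i} = card {i\<in>J - {j}. P i} + (if P j then 1 else 0)"
proof -
  have "{i\<in>J. P i} = (if P j then insert j {i\<in>J - {j}. P i} else {i\<in>J - {j}. P i})"
    using assms(2) by auto
  then show ?thesis
    using assms(1) by simp
qed

lemma card_Collect_remove_pair:
  assumes "finite J" "j \<in> J" "k \<in> J" "j \<noteq> k"
  shows "card {i\<in>J. P i} = card {i\<in>J - {j, k}. P i} + (if P j then 1 else 0) + (if P k then 1 else 0)"
  using card_Collect_remove[OF assms(1,2), of P] card_Collect_remove[of "J - {j}" k P] assms
  by (simp add: Diff_insert2[symmetric] insert_commute)

definition involution_balanced :: "'j set \<Rightarrow> ('j \<Rightarrow> 'c) \<Rightarrow> ('c \<Rightarrow> 'c) \<Rightarrow> 'c set \<Rightarrow> bool" where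
  "involution_balanced J c \<iota> R \<longleftrightarrow>
     (\<forall>j\<in>J. card {i\<in>J. c i = \<iota> (c j)} = card {i\<in>J. c i = c j}) \<and>
     (\<forall>j\<in>J. \<iota> (c j) = c j \<longrightarrow> c j \<notin> R \<longrightarrow> even (card {i\<in>J. c i = c j}))"

lemma involution_balanced_remove_fixed:
  assumes "finite J" "involution_balanced J c \<iota> R" "\<And>x. \<iota> (\<iota> x) = x"
    and "j0 \<in> J" "\<iota> (c j0) = c j0" "c j0 \<in> R"
  shows "involution_balanced (J - {j0}) c \<iota> R"
  unfolding involution_balanced_def
proof (intro conjI ballI impI)
  fix j assume j: "j \<in> J - {j0}"
  have "c j0 = \<iota> (c j) \<longleftrightarrow> c j0 = c j"
    using assms(3,5) by metis
  then show "card {i\<in>J - {j0}. c i = \<iota> (c j)} = card {i\<in>J - {j0}. c i = c j}"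
    using assms(2) j card_Collect_remove[OF assms(1,4), of "\<lambda>i. c i = \<iota> (c j)"]
      card_Collect_remove[OF assms(1,4), of "\<lambda>i. c i = c j"]
    by (simp add: involution_balanced_def)
  assume "\<iota> (c j) = c j" "c j \<notin> R"
  moreover from this have "c j0 \<noteq> c j"
    using assms(6) by auto
  ultimately show "even (card {i\<in>J - {j0}. c i = c j})"
    using assms(2) j card_Collect_remove[OF assms(1,4), of "\<lambda>i. c i = c j"]
    by (auto simp: involution_balanced_def)
qed

lemma involution_balanced_remove_pair:
  assumes "finite J" "involution_balanced J c \<iota> R" "\<And>x. \<iota> (\<iota> x) = x"
    and "j0 \<in> J" "j1 \<in> J" "j0 \<noteq> j1" "c j1 = \<iota> (c j0)"
  shows "involution_balanced (J - {j0, j1}) c \<iota> R"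
  unfolding involution_balanced_def
proof (intro conjI ballI impI)
  fix j assume j: "j \<in> J - {j0, j1}"
  note remove = card_Collect_remove_pair[OF assms(1,4,5,6)]
  have "c j0 = \<iota> (c j) \<longleftrightarrow> c j1 = c j" "c j1 = \<iota> (c j) \<longleftrightarrow> c j0 = c j"
    using assms(3,7) by metis+
  then show "card {i\<in>J - {j0, j1}. c i = \<iota> (c j)} = card {i\<in>J - {j0, j1}. c i = c j}"
    using assms(2) j remove[of "\<lambda>i. c i = \<iota> (c j)"] remove[of "\<lambda>i. c i = c j"]
    by (simp add: involution_balanced_def)
  assume fixed: "\<iota> (c j) = c j" "c j \<notin> R"
  have "c j0 = c j \<longleftrightarrow> c j1 = c j"
    using assms(3,7) fixed(1) by metis
  then show "even (card {i\<in>J - {j0, j1}. c i = c j})"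
    using assms(2) j fixed remove[of "\<lambda>i. c i = c j"]
    by (auto simp: involution_balanced_def)
qed

lemma involution_balanced_partner:
  assumes "finite J" "involution_balanced J c \<iota> R"
    and "j0 \<in> J" "\<not> (\<iota> (c j0) = c j0 \<and> c j0 \<in> R)"
  obtains j1 where "j1 \<in> J" "j1 \<noteq> j0" "c j1 = \<iota> (c j0)"
proof -
  have balanced: "card {i\<in>J. c i = \<iota> (c j0)} = card {i\<in>J. c i = c j0}"
    using assms(2,3) by (simp add: involution_balanced_def)
  have "card {i\<in>J. c i = c j0} \<noteq> 0"
    using assms(1,3) by auto
  moreover have "card {i\<in>J. c i = c j0} \<noteq> 1" if "\<iota> (c j0) = c j0"
    using assms(2-4) that by (auto simp: involution_balanced_def)
  ultimately have "card {i\<in>J - {j0}. c i = \<iota> (c j0)} \<noteq> 0"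
    using balanced card_Collect_remove[OF assms(1,3), of "\<lambda>i. c i = \<iota> (c j0)"]
    by (cases "\<iota> (c j0) = c j0") auto
  then have "{i\<in>J - {j0}. c i = \<iota> (c j0)} \<noteq> {}"
    by (metis card.empty)
  then show ?thesis
    using that by blast
qed

definition involution_matching :: "'j set \<Rightarrow> ('j \<Rightarrow> 'c) \<Rightarrow> ('c \<Rightarrow> 'c) \<Rightarrow> 'c set \<Rightarrow> ('j \<Rightarrow> 'j) \<Rightarrow> bool" where
  "involution_matching J c \<iota> R \<sigma> \<longleftrightarrow>
     (\<forall>j\<in>J. \<sigma> j \<in> J \<and> \<sigma> (\<sigma> j) = j \<and> c (\<sigma> j) = \<iota> (c j) \<and> (\<sigma> j = j \<longrightarrow> c j \<in> R))"

lemma involution_matching_insert_fixed: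
  assumes "involution_matching (J - {j0}) c \<iota> R \<sigma>" "j0 \<in> J" "\<iota> (c j0) = c j0" "c j0 \<in> R"
  shows "involution_matching J c \<iota> R (\<sigma>(j0 := j0))"
  unfolding involution_matching_def
proof
  fix j assume "j \<in> J"
  show "(\<sigma>(j0 := j0)) j \<in> J \<and> (\<sigma>(j0 := j0)) ((\<sigma>(j0 := j0)) j) = j
      \<and> c ((\<sigma>(j0 := j0)) j) = \<iota> (c j) \<and> ((\<sigma>(j0 := j0)) j = j \<longrightarrow> c j \<in> R)"
  proof (cases "j = j0")
    case False
    then have "j \<in> J - {j0}"
      using \<open>j \<in> J\<close> by blast
    from bspec[OF assms(1)[unfolded involution_matching_def] this] False show ?thesis
      by auto
  qed (use assms in simp)
qed

lemma involution_matching_insert_pair: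
  assumes "involution_matching (J - {j0, j1}) c \<iota> R \<sigma>" "j0 \<in> J" "j1 \<in> J" "j0 \<noteq> j1"
    and "c j1 = \<iota> (c j0)" "\<And>x. \<iota> (\<iota> x) = x"
  shows "involution_matching J c \<iota> R (\<sigma>(j0 := j1, j1 := j0))"
  unfolding involution_matching_def
proof
  fix j assume "j \<in> J"
  consider "j = j0" | "j = j1" | "j \<in> J - {j0, j1}"
    using \<open>j \<in> J\<close> by blast
  then show "(\<sigma>(j0 := j1, j1 := j0)) j \<in> J \<and> (\<sigma>(j0 := j1, j1 := j0)) ((\<sigma>(j0 := j1, j1 := j0)) j) = j
      \<and> c ((\<sigma>(j0 := j1, j1 := j0)) j) = \<iota> (c j) \<and> ((\<sigma>(j0 := j1, j1 := j0)) j = j \<longrightarrow> c j \<in> R)"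
  proof cases
    case 3
    from bspec[OF assms(1)[unfolded involution_matching_def] this] 3 show ?thesis
      by auto
  qed (use assms in auto)
qed

lemma involution_balanced_matching:
  assumes "finite J" "involution_balanced J c \<iota> R" "\<And>x. \<iota> (\<iota> x) = x"
  shows "\<exists>\<sigma>. involution_matching J c \<iota> R \<sigma>"
  using assms(1,2)
proof (induction "card J" arbitrary: J rule: less_induct)
  case less
  show ?case
  proof (cases "J = {}")
    case True
    show ?thesis
      using True by (intro exI[of _ id]) (simp add: involution_matching_def)
  next
    case False
    then obtain j0 where j0: "j0 \<in> J"
      by blast
    show ?thesis
    proof (cases "\<iota> (c j0) = c j0 \<and> c j0 \<in> R")
      case True
      from less.hyps[OF card_Diff1_less[OF less.prems(1) j0] finite_Diff[OF less.prems(1)]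
          involution_balanced_remove_fixed[OF less.prems assms(3) j0 True[THEN conjunct1] True[THEN conjunct2]]]
      obtain \<sigma> where "involution_matching (J - {j0}) c \<iota> R \<sigma>" ..
      from involution_matching_insert_fixed[OF this j0 True[THEN conjunct1] True[THEN conjunct2]]
      show ?thesis
        by blast
    next
      case False
      then obtain j1 where j1: "j1 \<in> J" "j1 \<noteq> j0" "c j1 = \<iota> (c j0)"
        using involution_balanced_partner[OF less.prems j0] by blast
      have "card (J - {j0, j1}) < card J"
        using less.prems(1) j0 by (intro psubset_card_mono) auto
      from less.hyps[OF this finite_Diff[OF less.prems(1)]
          involution_balanced_remove_pair[OF less.prems assms(3) j0 j1(1) not_sym[OF j1(2)] j1(3)]]
      obtain \<sigma> where "involution_matching (J - {j0, j1}) c \<iota> R \<sigma>" ..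
      from involution_matching_insert_pair[OF this j0 j1(1) not_sym[OF j1(2)] j1(3) assms(3)]
      show ?thesis
        by blast
    qed
  qed
qed

lemma involution_orbits_partition:
  assumes "\<And>j. j \<in> J \<Longrightarrow> \<sigma> j \<in> J \<and> \<sigma> (\<sigma> j) = j"
  shows "partition_on J ((\<lambda>j. {j, \<sigma> j}) ` J)"
proof (rule partition_onI)
  show "\<Union> ((\<lambda>j. {j, \<sigma> j}) ` J) = J"
    using assms by blast
  have orbit: "{j, \<sigma> j} = {x, \<sigma> x}" if "j \<in> J" "x \<in> {j, \<sigma> j}" for j x
    using that assms[OF that(1)] by auto
  fix p q assume "p \<in> (\<lambda>j. {j, \<sigma> j}) ` J" "q \<in> (\<lambda>j. {j, \<sigma> j}) ` J" "p \<noteq> q"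
  then show "disjnt p q"
    unfolding disjnt_def using orbit by blast
qed auto

lemma conj_involution_orbits:
  assumes "\<And>j. j \<in> J \<Longrightarrow> \<sigma> (\<sigma> j) = j \<and> b (\<sigma> j) = cnj (b j) \<and> (\<sigma> j = j \<longrightarrow> b j \<in> \<real>)"
  shows "\<forall>S\<in>(\<lambda>j. {j, \<sigma> j}) ` J. (\<exists>j. S = {j} \<and> b j \<in> \<real>) \<or> (\<exists>j k. j \<noteq> k \<and> S = {j, k} \<and> b j = cnj (b k))"
proof
  fix S assume "S \<in> (\<lambda>j. {j, \<sigma> j}) ` J"
  then obtain j where j: "j \<in> J" "S = {j, \<sigma> j}"
    by blast
  show "(\<exists>j. S = {j} \<and> b j \<in> \<real>) \<or> (\<exists>j k. j \<noteq> k \<and> S = {j, k} \<and> b j = cnj (b k))"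
  proof (cases "\<sigma> j = j")
    case True
    then show ?thesis
      using j assms[OF j(1)] by auto
  next
    case False
    then show ?thesis
      using j assms[OF j(1)] by (intro disjI2 exI[of _ "\<sigma> j"] exI[of _ j]) auto
  qed
qed

section \<open>Pairing the zeros of a real product\<close>

lemma conj_symmetric_representatives:
  fixes a :: "'j::linorder \<Rightarrow> complex"
  assumes "Re tau = 0" "Im tau > 0"
    and \<sigma>: "\<And>j. j \<in> J \<Longrightarrow> \<sigma> j \<in> J \<and> \<sigma> (\<sigma> j) = j"
    and conj: "\<And>j. j \<in> J \<Longrightarrow> a (\<sigma> j) - cnj (a j) \<in> period_lattice tau"
    and real: "\<And>j. j \<in> J \<Longrightarrow> \<sigma> j = j \<Longrightarrow> \<exists>x::real. a j - of_real x \<in> period_lattice tau"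
  obtains b where "\<And>j. j \<in> J \<Longrightarrow> a j - b j \<in> period_lattice tau \<and> \<bar>Im (b j)\<bar> < Im tau
    \<and> b (\<sigma> j) = cnj (b j) \<and> (\<sigma> j = j \<longrightarrow> b j \<in> \<real>)"
proof -
  obtain r where r: "\<And>z. z - r z \<in> period_lattice tau" "\<And>z. - Im tau / 2 \<le> Im (r z)" "\<And>z. Im (r z) < Im tau / 2"
    using period_lattice_representative[OF assms(1,2)] by blast
  define b where "b j = (if j \<le> \<sigma> j then r (a j) else cnj (r (a (\<sigma> j))))" for j
    \<comment> \<open>of each pair of conjugate indices, the smaller one chooses the representative\<close>
  have "a j - b j \<in> period_lattice tau \<and> \<bar>Im (b j)\<bar> < Im tau \<and> b (\<sigma> j) = cnj (b j) \<and> (\<sigma> j = j \<longrightarrow> b j \<in> \<real>)"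
    if j: "j \<in> J" for j
  proof (intro conjI impI)
    have "a j - cnj (r (a (\<sigma> j))) = (a j - cnj (a (\<sigma> j))) + cnj (a (\<sigma> j) - r (a (\<sigma> j)))"
      by simp
    also have "\<dots> \<in> period_lattice tau"
      using conj[of "\<sigma> j"] \<sigma>[OF j]
      by (intro period_lattice_add cnj_in_period_lattice[OF assms(1)] r(1)) simp
    finally have "a j - cnj (r (a (\<sigma> j))) \<in> period_lattice tau" .
    then show "a j - b j \<in> period_lattice tau"
      using r(1) by (simp add: b_def)
    show "\<bar>Im (b j)\<bar> < Im tau"
      using r(2,3)[of "a j"] r(2,3)[of "a (\<sigma> j)"] assms(2) by (auto simp: b_def)
    show fixed: "b j \<in> \<real>" if fixpoint: "\<sigma> j = j"
    proof -
      obtain x :: real where "a j - of_real x \<in> period_lattice tau"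
        using real[OF j fixpoint] by blast
      moreover have "r (a j) - of_real x = (a j - of_real x) - (a j - r (a j))"
        by simp
      ultimately have "r (a j) - of_real x \<in> period_lattice tau"
        using period_lattice_diff r(1) by metis
      then show ?thesis
        using in_Reals_if_period_congruent_real[OF assms(1,2)] r(2,3) fixpoint by (simp add: b_def)
    qed
    show "b (\<sigma> j) = cnj (b j)"
    proof (cases "\<sigma> j = j")
      case True
      then show ?thesis
        using fixed by (simp add: Reals_cnj_iff)
    next
      case False
      then show ?thesis
        using \<sigma>[OF j] by (auto simp: b_def)
    qed
  qed
  then show ?thesis
    using that by blast
qed

lemma self_conjugate_period_coset_meets_half_line:
  assumes "Re tau = 0" "Im tau > 0"
    and "cnj z - z \<in> period_lattice tau" "\<not> (\<exists>x::real. of_real x - z \<in> period_lattice tau)"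
  obtains x :: real where "(of_real x - jtheta_root tau) - z \<in> period_lattice tau"
proof -
  obtain q where q: "z - q \<in> period_lattice tau" "- Im tau / 2 \<le> Im q" "Im q < - Im tau / 2 + Im tau"
    using period_lattice_reduce[OF assms(1,2), of z "- Im tau / 2"] by blast
  have "cnj q - q = (cnj z - z) - cnj (z - q) + (z - q)"
    by simp
  also have "\<dots> \<in> period_lattice tau"
    by (rule period_lattice_add[OF period_lattice_diff[OF assms(3) cnj_in_period_lattice[OF assms(1) q(1)]] q(1)])
  finally obtain n :: int where "Im (cnj q - q) = of_int n * Im tau"
    using Im_in_period_lattice[OF assms(1)] by blast
  then have n: "Im tau * of_int n = - 2 * Im q"
    by simp
  then have "Im tau * (- 1) < Im tau * of_int n" "Im tau * of_int n \<le> Im tau * 1"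
    using q(2,3) by linarith+
  then have "- 1 < (of_int n :: real)" "(of_int n :: real) \<le> 1"
    using assms(2) by (simp_all only: mult_le_cancel_left_pos mult_less_cancel_left_pos)
  then consider "n = 0" | "n = 1"
    by linarith
  then have "Im q = - Im tau / 2"
  proof cases
    case 1
    then have "of_real (Re q) = q"
      using n by (simp add: complex_eq_iff)
    then have "of_real (Re q) - z \<in> period_lattice tau"
      using period_lattice_diff_commute[OF q(1)] by simp
    with assms(4) show ?thesis
      by blast
  qed (use n in simp)
  then have "of_real (Re q + 1 / 2) - jtheta_root tau = q"
    using assms(1) by (simp add: complex_eq_iff jtheta_root_def)
  then show ?thesis
    using that q(1) period_lattice_diff_commute by metis
qed

lemma involution_balanced_jtheta_cosets:
  fixes a :: "'j \<Rightarrow> complex"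
  assumes "Re tau = 0" "Im tau > 0" "finite J"
    and real: "\<And>x::real. (\<Prod>j\<in>J. jtheta tau (of_real x - a j)) \<in> \<real>"
    and sign: "(\<forall>x::real. Re (\<Prod>j\<in>J. jtheta tau (of_real x - a j)) \<ge> 0)
             \<or> (\<forall>x::real. Re (\<Prod>j\<in>J. jtheta tau (of_real x - a j)) \<le> 0)"
  shows "involution_balanced J (\<lambda>j. period_coset tau (a j)) ((`) cnj) {S. \<exists>x::real. of_real x \<in> S}"
proof -
  define c where "c = (\<lambda>j. period_coset tau (a j))"
  define R where "R = {S :: complex set. \<exists>x::real. of_real x \<in> S}"
  define f where "f = (\<lambda>z. \<Prod>j\<in>J. jtheta tau (z - a j))"
  have count: "card {i\<in>J. c i = period_coset tau w} = nat (zorder f (w + jtheta_root tau))" for w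
    using zorder_prod_jtheta_coset[OF assms(1-3), of a w] by (simp add: c_def f_def)
  have "card {i\<in>J. c i = cnj ` c j} = card {i\<in>J. c i = c j}" for j
  proof -
    have "f = (\<lambda>z. \<Prod>j\<in>J. jtheta tau (z - cnj (a j)))"
      using prod_jtheta_cnj_eq_if_real[OF assms(1,2) real] by (auto simp: f_def)
    then have "card {i\<in>J. c i = cnj ` c j} = card {i\<in>J. period_coset tau (cnj (a i)) = period_coset tau (cnj (a j))}"
      using count[of "cnj (a j)"] zorder_prod_jtheta_coset[OF assms(1-3), of "\<lambda>i. cnj (a i)" "cnj (a j)"]
      by (simp add: c_def cnj_period_coset[OF assms(1)])
    also have "\<dots> = card {i\<in>J. c i = c j}"
      by (simp add: c_def period_coset_eq_iff cnj_diff_in_period_lattice_iff[OF assms(1)])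
    finally show ?thesis .
  qed
  moreover have "even (card {i\<in>J. c i = c j})" if "cnj ` c j = c j" "c j \<notin> R" for j
  proof -
    have "cnj (a j) - a j \<in> period_lattice tau"
      using that(1) by (simp add: c_def cnj_period_coset[OF assms(1)] period_coset_eq_iff)
    moreover have "\<not> (\<exists>x::real. of_real x - a j \<in> period_lattice tau)"
      using that(2) by (simp add: R_def c_def period_coset_def)
    ultimately obtain x :: real where "(of_real x - jtheta_root tau) - a j \<in> period_lattice tau"
      using self_conjugate_period_coset_meets_half_line[OF assms(1,2)] by blast
    then have "c j = period_coset tau (of_real x - jtheta_root tau)"
      by (simp add: c_def period_coset_eq_iff period_lattice_diff_commute)
    moreover obtain x0 :: real where "(\<Prod>j\<in>J. jtheta tau (of_real x0 - a j)) \<noteq> 0"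
      using exists_real_prod_jtheta_neq_0[OF assms(1-3)] .
    then have "even (nat (zorder f (of_real x)))"
      unfolding f_def by (rule even_zorder_of_real[OF holomorphic_prod_jtheta[OF assms(2)] _ real sign])
    ultimately show ?thesis
      by (simp add: count)
  qed
  ultimately show ?thesis
    by (simp add: involution_balanced_def c_def R_def)
qed


lemma jtheta_zeros_conj_pairing:
  fixes a :: "'j::linorder \<Rightarrow> complex"
  assumes "Re tau = 0" "Im tau > 0" "finite J"
    and real: "\<And>x::real. (\<Prod>j\<in>J. jtheta tau (of_real x - a j)) \<in> \<real>"
    and sign: "(\<forall>x::real. Re (\<Prod>j\<in>J. jtheta tau (of_real x - a j)) \<ge> 0)
             \<or> (\<forall>x::real. Re (\<Prod>j\<in>J. jtheta tau (of_real x - a j)) \<le> 0)"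
  shows "\<exists>\<sigma> b. \<forall>j\<in>J. \<sigma> j \<in> J \<and> \<sigma> (\<sigma> j) = j \<and> b (\<sigma> j) = cnj (b j) \<and> (\<sigma> j = j \<longrightarrow> b j \<in> \<real>)
      \<and> a j - b j \<in> period_lattice tau \<and> \<bar>Im (b j)\<bar> < Im tau"
proof -
  define c where "c = (\<lambda>j. period_coset tau (a j))"
  define R where "R = {S :: complex set. \<exists>x::real. of_real x \<in> S}"
  have "cnj ` cnj ` S = S" for S :: "complex set"
    by (simp add: image_image)
  from involution_balanced_matching[OF assms(3) involution_balanced_jtheta_cosets[OF assms] this]
  obtain \<sigma> where \<sigma>: "\<forall>j\<in>J. \<sigma> j \<in> J \<and> \<sigma> (\<sigma> j) = j \<and> c (\<sigma> j) = cnj ` c j \<and> (\<sigma> j = j \<longrightarrow> c j \<in> R)"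
    unfolding involution_matching_def c_def R_def by blast
  have involution: "\<sigma> j \<in> J \<and> \<sigma> (\<sigma> j) = j" if "j \<in> J" for j
    using \<sigma> that by blast
  have conj: "a (\<sigma> j) - cnj (a j) \<in> period_lattice tau" if "j \<in> J" for j
    using \<sigma> that by (simp add: c_def cnj_period_coset[OF assms(1)] period_coset_eq_iff)
  have real_fixed: "\<exists>x::real. a j - of_real x \<in> period_lattice tau" if "j \<in> J" "\<sigma> j = j" for j
  proof -
    have "c j \<in> R"
      using \<sigma> that by blast
    then obtain x :: real where "of_real x - a j \<in> period_lattice tau"
      by (auto simp: c_def R_def period_coset_def)
    then show ?thesis
      using period_lattice_diff_commute by blast
  qed
  obtain b where b: "\<And>j. j \<in> J \<Longrightarrow> a j - b j \<in> period_lattice tau \<and> \<bar>Im (b j)\<bar> < Im tau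
      \<and> b (\<sigma> j) = cnj (b j) \<and> (\<sigma> j = j \<longrightarrow> b j \<in> \<real>)"
    using conj_symmetric_representatives[where J = J and \<sigma> = \<sigma> and a = a, OF assms(1,2) involution conj real_fixed] by blast
  show ?thesis
  proof (intro exI[of _ \<sigma>] exI[of _ b] ballI)
    fix j assume "j \<in> J"
    then show "\<sigma> j \<in> J \<and> \<sigma> (\<sigma> j) = j \<and> b (\<sigma> j) = cnj (b j) \<and> (\<sigma> j = j \<longrightarrow> b j \<in> \<real>)
        \<and> a j - b j \<in> period_lattice tau \<and> \<bar>Im (b j)\<bar> < Im tau"
      using involution b by simp
  qed
qed

lemma prod_jtheta_eq_real_multiple:
  assumes "Re tau = 0" "Im tau > 0" "finite J"
    and real: "\<And>x::real. (\<Prod>j\<in>J. jtheta tau (of_real x - a j)) \<in> \<real>"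
    and \<sigma>: "\<And>j. j \<in> J \<Longrightarrow> \<sigma> j \<in> J \<and> \<sigma> (\<sigma> j) = j \<and> b (\<sigma> j) = cnj (b j)"
    and periods: "\<And>j. j \<in> J \<Longrightarrow> a j - b j \<in> period_lattice tau"
  shows "\<exists>lam::real. lam \<noteq> 0 \<and> (\<forall>z. (\<Prod>j\<in>J. jtheta tau (z - a j)) = of_real lam * (\<Prod>j\<in>J. jtheta tau (z - b j)))"
proof -
  note real_b = prod_jtheta_real_if_conj_closed[OF assms(1) \<sigma>]
  have "(\<Sum>j\<in>J. Im (a j)) = (\<Sum>j\<in>J. Im (b j))"
    using sum_Im_eq_0_if_prod_jtheta_real[OF assms(1-3) real]
      sum_Im_eq_0_if_prod_jtheta_real[OF assms(1-3) real_b] by simp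
  then obtain m n where mn: "\<forall>j\<in>J. a j - b j = of_int (m j) + of_int (n j) * tau" "(\<Sum>j\<in>J. n j) = 0"
    using period_lattice_decomposition_balanced[where a = a and b = b, OF assms(1-3) periods] by blast
  then have "\<exists>K. K \<noteq> 0 \<and> (\<forall>z. (\<Prod>j\<in>J. jtheta tau (z - a j)) = K * (\<Prod>j\<in>J. jtheta tau (z - b j)))"
    by (intro prod_jtheta_shift_periods[where m = m and n = n, OF assms(3)]) auto
  then obtain K where "K \<noteq> 0" and K: "\<forall>z. (\<Prod>j\<in>J. jtheta tau (z - a j)) = K * (\<Prod>j\<in>J. jtheta tau (z - b j))"
    by blast
  obtain x :: real where "(\<Prod>j\<in>J. jtheta tau (of_real x - b j)) \<noteq> 0"
    using exists_real_prod_jtheta_neq_0[OF assms(1-3)] .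
  then have "K = (\<Prod>j\<in>J. jtheta tau (of_real x - a j)) / (\<Prod>j\<in>J. jtheta tau (of_real x - b j))"
    using K by simp
  then have "K \<in> \<real>"
    using real[of x] real_b[of x] by (simp add: Reals_divide)
  then have lam: "of_real (Re K) = K"
    by (simp add: complex_is_Real_iff complex_eq_iff)
  show ?thesis
  proof (intro exI[of _ "Re K"] conjI allI)
    show "Re K \<noteq> 0"
      using lam \<open>K \<noteq> 0\<close> by force
    show "(\<Prod>j\<in>J. jtheta tau (z - a j)) = of_real (Re K) * (\<Prod>j\<in>J. jtheta tau (z - b j))" for z
      unfolding lam using K by blast
  qed
qed

theorem lemma3p6:
  fixes tau :: complex and n :: nat and a :: "nat \<Rightarrow> complex"
  assumes "Re tau = 0" and "Im tau > 0"
    and "(\<forall>x::real. (\<Prod>j=1..n. jtheta tau (of_real x - a j)) \<in> \<real>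
                      \<and> Re (\<Prod>j=1..n. jtheta tau (of_real x - a j)) \<ge> 0)
       \<or> (\<forall>x::real. (\<Prod>j=1..n. jtheta tau (of_real x - a j)) \<in> \<real>
                      \<and> Re (\<Prod>j=1..n. jtheta tau (of_real x - a j)) \<le> 0)"
  shows "\<exists>(lam::real) (b::nat \<Rightarrow> complex) P.
           lam \<noteq> 0
         \<and> (\<forall>j\<in>{1..n}. \<bar>Im (b j)\<bar> < Im tau)
         \<and> partition_on {1..n} P
         \<and> (\<forall>S\<in>P. (\<exists>j. S = {j} \<and> b j \<in> \<real>)
                  \<or> (\<exists>j k. j \<noteq> k \<and> S = {j, k} \<and> b j = cnj (b k)))
         \<and> (\<forall>z::complex. (\<Prod>j=1..n. jtheta tau (z - a j))
                         = of_real lam * (\<Prod>j=1..n. jtheta tau (z - b j)))"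
proof -
  have real: "\<And>x::real. (\<Prod>j=1..n. jtheta tau (of_real x - a j)) \<in> \<real>"
    and sign: "(\<forall>x::real. Re (\<Prod>j=1..n. jtheta tau (of_real x - a j)) \<ge> 0)
             \<or> (\<forall>x::real. Re (\<Prod>j=1..n. jtheta tau (of_real x - a j)) \<le> 0)"
    using assms(3) by blast+
  obtain \<sigma> b where pairing: "\<forall>j\<in>{1..n}. \<sigma> j \<in> {1..n} \<and> \<sigma> (\<sigma> j) = j \<and> b (\<sigma> j) = cnj (b j)
      \<and> (\<sigma> j = j \<longrightarrow> b j \<in> \<real>) \<and> a j - b j \<in> period_lattice tau \<and> \<bar>Im (b j)\<bar> < Im tau"
    using jtheta_zeros_conj_pairing[where J = "{1..n}" and a = a, OF assms(1,2) finite_atLeastAtMost real sign]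
    by blast
  have involution: "\<And>j. j \<in> {1..n} \<Longrightarrow> \<sigma> j \<in> {1..n} \<and> \<sigma> (\<sigma> j) = j \<and> b (\<sigma> j) = cnj (b j)"
    and periods: "\<And>j. j \<in> {1..n} \<Longrightarrow> a j - b j \<in> period_lattice tau"
    using pairing by blast+
  obtain lam where "lam \<noteq> 0"
    and "\<forall>z. (\<Prod>j=1..n. jtheta tau (z - a j)) = of_real lam * (\<Prod>j=1..n. jtheta tau (z - b j))"
    using prod_jtheta_eq_real_multiple[where J = "{1..n}" and a = a and b = b and \<sigma> = \<sigma>,
          OF assms(1,2) finite_atLeastAtMost real involution periods] by blast
  moreover have "partition_on {1..n} ((\<lambda>j. {j, \<sigma> j}) ` {1..n})"
    by (rule involution_orbits_partition) (use involution in blast)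
  moreover have "\<forall>S\<in>(\<lambda>j. {j, \<sigma> j}) ` {1..n}. (\<exists>j. S = {j} \<and> b j \<in> \<real>) \<or> (\<exists>j k. j \<noteq> k \<and> S = {j, k} \<and> b j = cnj (b k))"
    using pairing by (intro conj_involution_orbits) blast
  ultimately show ?thesis
    using pairing by (intro exI[of _ lam] exI[of _ b] exI[of _ "(\<lambda>j. {j, \<sigma> j}) ` {1..n}"]) auto
qed

end
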